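(* Let $w\in W_0^J$ and $\beta\in\Delta_0^+\setminus\Delta_J^+$ be such that there is an edge $\lfloor wr_\beta\rfloor\xleftarrow{\beta}w$ in the parabolic quantum Bruhat graph. Let $j\in I_0$. (1) If $\langle w\Lambda,\alpha_j^\vee\rangle>0$ and $w\beta\ne\pm\alpha_j$, then $\langle wr_\beta\Lambda,\alpha_j^\vee\rangle>0$; moreover both $r_j\lfloor wr_\beta\rfloor$ and $r_jw$ lie in $W_0^J$, and there is an edge $r_j\lfloor wr_\beta\rfloor\xleftarrow{\beta}r_jw$. (2) If $\langle wr_\beta\Lambda,\alpha_j^\vee\rangle<0$ and $w\beta\ne\pm\alpha_j$, then $\langle w\Lambda,\alpha_j^\vee\rangle<0$; moreover both $r_j\lfloor wr_\beta\rfloor$ and $r_jw$ lie in $W_0^J$, and there is an edge $r_j\lfloor wr_\beta\rfloor\xleftarrow{\beta}r_jw$. (3) If $\langle wr_\beta\Lambda,\alpha_j^\vee\rangle<0$ and $\langle w\Lambda,\alpha_j^\vee\rangle\ge0$, then $w\beta=\pm\alpha_j$. (4) If $\langle wr_\beta\Lambda,\alpha_j^\vee\rangle\le0$ and $\langle w\Lambda,\alpha_j^\vee\rangle>0$, then $w\beta=\pm\alpha_j$.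
   Context: Let $\Delta_0$ be the (finite, reduced, irreducible) root system of the finite-dimensional simple Lie algebra underlying an untwisted affine Lie algebra, with simple roots $\alpha_j$, simple coroots $\alpha_j^\vee$ ($j\in I_0$), positive roots $\Delta_0^+$, Weyl group $W_0$ generated by simple reflections $r_j$. Let $\lambda=\sum_{i\in I_0}m_i\varpi_i$ ($m_i\in\mathbb{Z}_{\ge0}$) be a level-zero dominant integral weight and $\Lambda=\mathrm{cl}(\lambda)$ its image modulo $\mathbb{C}\delta$, so $\langle\Lambda,\alpha_j^\vee\rangle=m_j$ for $j\in I_0$; $W_0$ acts on $\Lambda$. Let $J=\{j\in I_0\mid\langle\Lambda,\alpha_j^\vee\rangle=0\}$, $W_J=\langle r_j\mid j\in J\rangle$, $\Delta_J^+=\Delta_0^+\cap\bigoplus_{j\in J}\mathbb{Z}\alpha_j$, $W_0^J$ the set of minimal-length representatives of $W_0/W_J$, $\lfloor w\rfloor\in W_0^J$ the representative of $wW_J$, $\ell$ the length, $\rho=\frac12\sum_{\alpha\in\Delta_0^+}\alpha$, $\rho_J=\frac12\sum_{\alpha\in\Delta_J^+}\alpha$. The parabolic quantum Bruhat graph has vertex set $W_0^J$ and a directed edge $\lfloor wr_\beta\rfloor\xleftarrow{\beta}w$ for $w\in W_0^J$, $\beta\in\Delta_0^+\setminus\Delta_J^+$, whenever either $\ell(\lfloor wr_\beta\rfloor)=\ell(w)+1$ (Bruhat edge) or $\ell(\lfloor wr_\beta\rfloor)=\ell(w)-2\langle\rho-\rho_J,\beta^\vee\rangle+1$ (quantum edge).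 *)

theory Defs
  imports "HOL-Analysis.Analysis"
begin

text \<open>Reflection in the hyperplane orthogonal to a, and the pairing with the coroot:
  pairing x a = <x, a^vee> = 2 (x,a)/(a,a).\<close>

definition refl :: "'a::euclidean_space \<Rightarrow> 'a \<Rightarrow> 'a" where
  "refl a x = x - (2 * (x \<bullet> a) / (a \<bullet> a)) *\<^sub>R a"

definition pairing :: "'a::euclidean_space \<Rightarrow> 'a \<Rightarrow> real" where
  "pairing x a = 2 * (x \<bullet> a) / (a \<bullet> a)"

definition root_system :: "'a::euclidean_space set \<Rightarrow> bool" where
  "root_system R \<longleftrightarrow>
     finite R \<and> 0 \<notin> R \<and> span R = UNIV \<and>
     (\<forall>a\<in>R. refl a ` R = R) \<and>
     (\<forall>a\<in>R. \<forall>b\<in>R. pairing b a \<in> \<int>) \<and>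
     (\<forall>a\<in>R. \<forall>c::real. c *\<^sub>R a \<in> R \<longrightarrow> c = 1 \<or> c = -1)"

definition irreducible_rs :: "'a::euclidean_space set \<Rightarrow> bool" where
  "irreducible_rs R \<longleftrightarrow>
     \<not> (\<exists>A B. A \<union> B = R \<and> A \<inter> B = {} \<and> A \<noteq> {} \<and> B \<noteq> {} \<and>
            (\<forall>a\<in>A. \<forall>b\<in>B. a \<bullet> b = 0))"

definition is_base :: "'a::euclidean_space set \<Rightarrow> 'i set \<Rightarrow> ('i \<Rightarrow> 'a) \<Rightarrow> bool" where
  "is_base R I alpha \<longleftrightarrow>
     finite I \<and> alpha ` I \<subseteq> R \<and> inj_on alpha I \<and> independent (alpha ` I) \<and>
     (\<forall>b\<in>R. \<exists>c::'i \<Rightarrow> int. ((\<forall>i\<in>I. c i \<ge> 0) \<or> (\<forall>i\<in>I. c i \<le> 0)) \<and>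
              b = (\<Sum>i\<in>I. of_int (c i) *\<^sub>R alpha i))"

definition pos_roots :: "'a::euclidean_space set \<Rightarrow> 'i set \<Rightarrow> ('i \<Rightarrow> 'a) \<Rightarrow> 'a set" where
  "pos_roots R I alpha =
     {b\<in>R. \<exists>c::'i \<Rightarrow> int. (\<forall>i\<in>I. c i \<ge> 0) \<and> b = (\<Sum>i\<in>I. of_int (c i) *\<^sub>R alpha i)}"

definition pos_roots_J :: "'a::euclidean_space set \<Rightarrow> 'i set \<Rightarrow> ('i \<Rightarrow> 'a) \<Rightarrow> 'i set \<Rightarrow> 'a set" where
  "pos_roots_J R I alpha J =
     {b\<in>pos_roots R I alpha. \<exists>c::'i \<Rightarrow> int. b = (\<Sum>j\<in>J. of_int (c j) *\<^sub>R alpha j)}"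

definition word :: "('i \<Rightarrow> 'a::euclidean_space) \<Rightarrow> 'i list \<Rightarrow> 'a \<Rightarrow> 'a" where
  "word alpha is = foldr (\<lambda>i f. refl (alpha i) \<circ> f) is id"

definition weyl_gen :: "('i \<Rightarrow> 'a::euclidean_space) \<Rightarrow> 'i set \<Rightarrow> ('a \<Rightarrow> 'a) set" where
  "weyl_gen alpha K = {word alpha is | is. set is \<subseteq> K}"

definition wlen :: "('i \<Rightarrow> 'a::euclidean_space) \<Rightarrow> 'i set \<Rightarrow> ('a \<Rightarrow> 'a) \<Rightarrow> nat" where
  "wlen alpha I w = (LEAST n. \<exists>is. set is \<subseteq> I \<and> length is = n \<and> w = word alpha is)"

definition Jset :: "('i \<Rightarrow> 'a::euclidean_space) \<Rightarrow> 'i set \<Rightarrow> 'a \<Rightarrow> 'i set" where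
  "Jset alpha I Lam = {j\<in>I. pairing Lam (alpha j) = 0}"

definition minreps :: "('i \<Rightarrow> 'a::euclidean_space) \<Rightarrow> 'i set \<Rightarrow> 'i set \<Rightarrow> ('a \<Rightarrow> 'a) set" where
  "minreps alpha I J = {w\<in>weyl_gen alpha I.
      \<forall>v\<in>weyl_gen alpha J. wlen alpha I w \<le> wlen alpha I (w \<circ> v)}"

definition minrep :: "('i \<Rightarrow> 'a::euclidean_space) \<Rightarrow> 'i set \<Rightarrow> 'i set \<Rightarrow> ('a \<Rightarrow> 'a) \<Rightarrow> ('a \<Rightarrow> 'a)" where
  "minrep alpha I J w = (THE u. u \<in> minreps alpha I J \<and> (\<exists>v\<in>weyl_gen alpha J. u = w \<circ> v))"

definition rho :: "'a::euclidean_space set \<Rightarrow> 'i set \<Rightarrow> ('i \<Rightarrow> 'a) \<Rightarrow> 'a" where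
  "rho R I alpha = (1/2) *\<^sub>R (\<Sum>b\<in>pos_roots R I alpha. b)"

definition rho_J :: "'a::euclidean_space set \<Rightarrow> 'i set \<Rightarrow> ('i \<Rightarrow> 'a) \<Rightarrow> 'i set \<Rightarrow> 'a" where
  "rho_J R I alpha J = (1/2) *\<^sub>R (\<Sum>b\<in>pos_roots_J R I alpha J. b)"

text \<open>Edge  minrep(w r_b) <--b-- w  in the parabolic quantum Bruhat graph; the third
  argument is the target vertex, which must equal minrep(w r_b).\<close>

definition pqbg_edge :: "'a::euclidean_space set \<Rightarrow> 'i set \<Rightarrow> ('i \<Rightarrow> 'a) \<Rightarrow> 'i set \<Rightarrow>
    ('a \<Rightarrow> 'a) \<Rightarrow> 'a \<Rightarrow> ('a \<Rightarrow> 'a) \<Rightarrow> bool" where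
  "pqbg_edge R I alpha J w b u \<longleftrightarrow>
     w \<in> minreps alpha I J \<and>
     b \<in> pos_roots R I alpha - pos_roots_J R I alpha J \<and>
     u = minrep alpha I J (w \<circ> refl b) \<and>
     (wlen alpha I u = wlen alpha I w + 1 \<or>
      real (wlen alpha I u) = real (wlen alpha I w)
          - 2 * pairing (rho R I alpha - rho_J R I alpha J) b + 1)"

end

theory Submission
  imports Defs
begin

text \<open>
  The length of the minimal representative \<open>\<lfloor>x\<rfloor>\<close> is the number \<open>\<ell>\<^sub>\<Lambda>(x)\<close> of roots \<open>a\<close>
  with \<open>(\<Lambda>, a) > 0\<close> that \<open>x\<close> makes negative. It depends only on \<open>x\<Lambda>\<close>, so left
  multiplication by \<open>r\<^sub>j\<close> changes it by \<open>sgn \<langle>x\<Lambda>, \<alpha>\<^sub>j\<^sup>\<or>\<rangle>\<close>. Along an edge \<open>w \<rightarrow> \<lfloor>w r\<^sub>\<beta>\<rfloor>\<close> the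
  length grows by \<open>1\<close> or by \<open>1 - 2\<langle>\<rho> - \<rho>\<^sub>J, \<beta>\<^sup>\<or>\<rangle>\<close>. Two counting inequalities valid for every
  \<open>x\<close>, namely \<open>\<ell>\<^sub>\<Lambda>(x r\<^sub>\<beta>) \<ge> \<ell>\<^sub>\<Lambda>(x) + 1\<close> when \<open>x\<beta> > 0\<close> and
  \<open>\<ell>\<^sub>\<Lambda>(x) - \<ell>\<^sub>\<Lambda>(x r\<^sub>\<beta>) \<le> 2\<langle>\<rho> - \<rho>\<^sub>J, \<beta>\<^sup>\<or>\<rangle> - 1\<close>, show that the length difference across
  the edge can only grow when \<open>w\<close> is replaced by \<open>r\<^sub>j w\<close> (for a Bruhat edge provided
  \<open>w\<beta> \<noteq> \<alpha>\<^sub>j\<close>). Comparing the two shifts gives \<open>sgn \<langle>w\<Lambda>, \<alpha>\<^sub>j\<^sup>\<or>\<rangle> \<le> sgn \<langle>w r\<^sub>\<beta>\<Lambda>, \<alpha>\<^sub>j\<^sup>\<or>\<rangle>\<close>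
  unless \<open>w\<beta> = \<alpha>\<^sub>j\<close>, which yields all four statements; when the two signs agree and are
  non-zero, both ends of the edge shift by the same amount and stay minimal, so the edge is
  transported.
\<close>

lemma linear_refl: "linear (refl a)"
  unfolding refl_def
  by (auto simp: linear_iff inner_add_left algebra_simps add_divide_distrib scaleR_add_left)

lemma refl_minus: "refl a (- x) = - refl a x"
  using linear_refl linear_neg by blast

lemma refl_eq_pairing: "refl a x = x - pairing x a *\<^sub>R a"
  unfolding refl_def pairing_def by simp

lemma inner_refl_left: "refl a x \<bullet> y = x \<bullet> y - pairing x a * (a \<bullet> y)"
  unfolding refl_def pairing_def by (simp add: inner_diff_left)

lemma refl_inner_sym: "refl a x \<bullet> y = x \<bullet> refl a y"
  unfolding refl_def by (simp add: inner_diff_left inner_diff_right inner_commute)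

lemma refl_self: "a \<noteq> 0 \<Longrightarrow> refl a a = - a"
  unfolding refl_def by (simp add: algebra_simps scaleR_2)

lemma pairing_refl_self: "a \<noteq> 0 \<Longrightarrow> pairing (refl a x) a = - pairing x a"
  unfolding pairing_def using refl_inner_sym[of a x a] by (simp add: refl_self)

lemma refl_refl [simp]: "a \<noteq> 0 \<Longrightarrow> refl a (refl a x) = x"
  using refl_eq_pairing[of a "refl a x"] refl_eq_pairing[of a x] pairing_refl_self[of a x] by simp

lemma inj_refl: "a \<noteq> 0 \<Longrightarrow> inj (refl a)"
  by (metis injI refl_refl)

lemma refl_inner_refl: "a \<noteq> 0 \<Longrightarrow> refl a x \<bullet> refl a y = x \<bullet> y"
  by (simp add: refl_inner_sym)

lemma refl_uminus: "refl (- a) = refl a"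
  unfolding refl_def by (rule ext) simp

lemma refl_conj:
  assumes "linear f" "\<And>x y. f x \<bullet> f y = x \<bullet> y"
  shows "refl (f a) (f x) = f (refl a x)"
  unfolding refl_def using assms by (simp add: linear_diff linear_scale)

lemma sgn_pairing: "a \<noteq> 0 \<Longrightarrow> sgn (pairing x a) = sgn (x \<bullet> a)"
proof -
  assume "a \<noteq> 0"
  then have "2 / (a \<bullet> a) > 0" by simp
  moreover have "pairing x a = (x \<bullet> a) * (2 / (a \<bullet> a))" by (simp add: pairing_def)
  ultimately show ?thesis by (simp add: sgn_mult)
qed

lemma word_Nil [simp]: "word alpha [] = id"
  by (simp add: word_def)

lemma word_Cons [simp]: "word alpha (i # is) = refl (alpha i) \<circ> word alpha is"
  by (simp add: word_def)

lemma word_append: "word alpha (is @ js) = word alpha is \<circ> word alpha js"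
  by (induction "is") auto

lemma linear_word: "linear (word alpha is)"
proof (induction "is")
  case Nil
  show ?case using linear_id by (simp add: id_def)
next
  case (Cons i "is")
  show ?case unfolding word_Cons by (rule linear_compose[OF Cons.IH linear_refl])
qed

lemma word_inner_word:
  "(\<And>i. i \<in> set is \<Longrightarrow> alpha i \<noteq> 0) \<Longrightarrow> word alpha is x \<bullet> word alpha is y = x \<bullet> y"
  by (induction "is" arbitrary: x y) (auto simp: refl_inner_refl)

lemma word_rev_word:
  "(\<And>i. i \<in> set is \<Longrightarrow> alpha i \<noteq> 0) \<Longrightarrow> word alpha is (word alpha (rev is) x) = x"
  by (induction "is" arbitrary: x) (auto simp: word_append)

lemma card_eq_involution:
  assumes "\<forall>x\<in>A. f x \<in> B" "\<forall>x\<in>B. f x \<in> A" "\<forall>x\<in>A. f (f x) = x" "\<forall>x\<in>B. f (f x) = x"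
  shows "card A = card B"
  by (rule bij_betw_same_card, rule bij_betw_byWitness[of A f f]) (use assms in auto)

lemma sum_involution:
  assumes "\<forall>x\<in>A. f x \<in> A" "\<forall>x\<in>A. f (f x) = x"
  shows "(\<Sum>x\<in>A. g (f x)) = sum g A"
  by (rule sum.reindex_bij_witness[of A f f]) (use assms in auto)

lemma sum_sgn_eq_card_diff:
  "finite A \<Longrightarrow> (\<Sum>x\<in>A. sgn (F x :: real)) = real (card {x\<in>A. F x > 0}) - real (card {x\<in>A. F x < 0})"
proof -
  assume A: "finite A"
  have "(\<Sum>x\<in>A. sgn (F x)) = (\<Sum>x\<in>A. (if F x > 0 then 1 else 0) - (if F x < 0 then 1 else (0::real)))"
    by (rule sum.cong) (auto simp: sgn_real_def)
  also have "\<dots> = real (card {x\<in>A. F x > 0}) - real (card {x\<in>A. F x < 0})"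
    using sum.inter_filter[OF A, of "\<lambda>_. (1::real)"] by (simp add: sum_subtractf)
  finally show ?thesis .
qed

section \<open>Heights and positive roots\<close>

locale root_base =
  fixes R :: "'a::euclidean_space set" and I :: "'i set" and alpha :: "'i \<Rightarrow> 'a"
  assumes root_system: "root_system R" and base: "is_base R I alpha"
begin

lemma finite_roots: "finite R"
  using root_system by (simp add: root_system_def)

lemma root_nonzero: "a \<in> R \<Longrightarrow> a \<noteq> 0"
  using root_system by (auto simp: root_system_def)

lemma refl_root: "a \<in> R \<Longrightarrow> b \<in> R \<Longrightarrow> refl a b \<in> R"
  using root_system by (auto simp: root_system_def)

lemma pairing_root_Ints: "a \<in> R \<Longrightarrow> b \<in> R \<Longrightarrow> pairing b a \<in> \<int>"
  using root_system by (simp add: root_system_def)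

lemma root_multiple: "a \<in> R \<Longrightarrow> c *\<^sub>R a \<in> R \<Longrightarrow> c = 1 \<or> c = -1"
  using root_system by (simp add: root_system_def)

lemma finite_I: "finite I"
  using base by (simp add: is_base_def)

lemma simple_root: "i \<in> I \<Longrightarrow> alpha i \<in> R"
  using base by (auto simp: is_base_def)

lemma root_expansion:
  "b \<in> R \<Longrightarrow> \<exists>c::'i \<Rightarrow> int. ((\<forall>i\<in>I. c i \<ge> 0) \<or> (\<forall>i\<in>I. c i \<le> 0)) \<and>
     b = (\<Sum>i\<in>I. of_int (c i) *\<^sub>R alpha i)"
  using base by (simp add: is_base_def)

lemma uminus_root: "a \<in> R \<Longrightarrow> - a \<in> R"
  by (metis refl_root refl_self root_nonzero)

lemma inner_root_pos: "a \<in> R \<Longrightarrow> a \<bullet> a > 0"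
  using root_nonzero by simp

lemma simple_nonzero: "i \<in> I \<Longrightarrow> alpha i \<noteq> 0"
  using simple_root root_nonzero by auto

lemma simple_coeffs_unique:
  assumes "(\<Sum>i\<in>I. c i *\<^sub>R alpha i) = (\<Sum>i\<in>I. d i *\<^sub>R alpha i)" and "m \<in> I"
  shows "c m = d m"
proof (rule ccontr)
  assume "c m \<noteq> d m"
  have inj: "inj_on alpha I" and indep: "independent (alpha ` I)"
    using base by (auto simp: is_base_def)
  define u where "u v = c (the_inv_into I alpha v) - d (the_inv_into I alpha v)" for v
  have "(\<Sum>v\<in>alpha ` I. u v *\<^sub>R v) = (\<Sum>i\<in>I. (c i - d i) *\<^sub>R alpha i)"
    by (simp add: sum.reindex[OF inj] u_def the_inv_into_f_f[OF inj])
  also have "\<dots> = 0"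
    using assms(1) by (simp add: scaleR_diff_left sum_subtractf)
  moreover have "u (alpha m) \<noteq> 0"
    using \<open>c m \<noteq> d m\<close> assms(2) by (simp add: u_def the_inv_into_f_f[OF inj])
  ultimately have "dependent (alpha ` I)"
    using dependent_finite[of "alpha ` I"] finite_I assms(2) by auto
  then show False
    using indep by simp
qed

text \<open>Any linear functional equal to \<open>1\<close> on the simple roots; only its values on roots matter.\<close>

definition height :: "'a \<Rightarrow> real" where
  "height = (SOME g. linear g \<and> (\<forall>i\<in>I. g (alpha i) = 1))"

lemma height_spec: "linear height \<and> (\<forall>i\<in>I. height (alpha i) = 1)"
proof -
  have "independent (alpha ` I)"
    using base by (simp add: is_base_def)
  then obtain g :: "'a \<Rightarrow> real" where "linear g" "\<forall>x\<in>alpha ` I. g x = 1"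
    using linear_independent_extend[of "alpha ` I" "\<lambda>_. 1"] by blast
  then have "\<exists>g. linear g \<and> (\<forall>i\<in>I. g (alpha i) = (1::real))"
    by auto
  then show ?thesis
    unfolding height_def by (rule someI_ex)
qed

lemma linear_height: "linear height"
  using height_spec by blast

lemma height_simple [simp]: "i \<in> I \<Longrightarrow> height (alpha i) = 1"
  using height_spec by blast

lemma height_diff: "height (x - y) = height x - height y"
  using linear_height linear_diff by blast

lemma height_uminus: "height (- x) = - height x"
  using linear_height linear_neg by blast

lemma height_scaleR: "height (c *\<^sub>R x) = c * height x"
  using linear_height linear_scale by (metis real_scaleR_def)

lemma height_sum: "height (\<Sum>i\<in>I. c i *\<^sub>R alpha i) = (\<Sum>i\<in>I. c i)"
proof -
  have "height (\<Sum>i\<in>I. c i *\<^sub>R alpha i) = (\<Sum>i\<in>I. height (c i *\<^sub>R alpha i))"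
    using linear_sum[OF linear_height] by blast
  also have "\<dots> = (\<Sum>i\<in>I. c i)"
    by (rule sum.cong) (auto simp: height_scaleR)
  finally show ?thesis .
qed

lemma root_expansion_height:
  assumes "b \<in> R"
  obtains c :: "'i \<Rightarrow> int" where "b = (\<Sum>i\<in>I. of_int (c i) *\<^sub>R alpha i)"
    "height b > 0 \<and> (\<forall>i\<in>I. c i \<ge> 0) \<or> height b < 0 \<and> (\<forall>i\<in>I. c i \<le> 0)"
proof -
  obtain c :: "'i \<Rightarrow> int" where c: "(\<forall>i\<in>I. c i \<ge> 0) \<or> (\<forall>i\<in>I. c i \<le> 0)"
    "b = (\<Sum>i\<in>I. of_int (c i) *\<^sub>R alpha i)"
    using root_expansion[OF assms] by blast
  have height_b: "height b = (\<Sum>i\<in>I. real_of_int (c i))"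
    using c(2) height_sum by simp
  have "\<exists>k\<in>I. c k \<noteq> 0"
  proof (rule ccontr)
    assume "\<not> ?thesis"
    then have "b = 0"
      using c(2) by simp
    then show False
      using assms root_nonzero by simp
  qed
  then obtain k where k: "k \<in> I" "c k \<noteq> 0"
    by blast
  show ?thesis
  proof (cases "\<forall>i\<in>I. c i \<ge> 0")
    case True
    have "real_of_int (c k) \<le> (\<Sum>i\<in>I. real_of_int (c i))"
      using True k finite_I by (intro member_le_sum) auto
    moreover have "c k > 0"
      using True k by force
    ultimately show ?thesis
      using that c True height_b by simp
  next
    case False
    with c(1) have nonpos: "\<forall>i\<in>I. c i \<le> 0"
      by blast
    have "(\<Sum>i\<in>I. - real_of_int (c i)) \<ge> - real_of_int (c k)"
      using nonpos k finite_I by (intro member_le_sum) auto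
    moreover have "c k < 0"
      using nonpos k by force
    ultimately show ?thesis
      using that c nonpos height_b by (simp add: sum_negf)
  qed
qed

lemma height_nonzero: "b \<in> R \<Longrightarrow> height b \<noteq> 0"
  by (rule root_expansion_height) auto

lemma pos_root_expansion:
  "b \<in> R \<Longrightarrow> height b > 0 \<Longrightarrow>
    \<exists>c::'i\<Rightarrow>int. (\<forall>i\<in>I. c i \<ge> 0) \<and> b = (\<Sum>i\<in>I. of_int (c i) *\<^sub>R alpha i)"
  by (rule root_expansion_height) auto

lemma neg_root_expansion:
  "b \<in> R \<Longrightarrow> height b < 0 \<Longrightarrow>
    \<exists>c::'i\<Rightarrow>int. (\<forall>i\<in>I. c i \<le> 0) \<and> b = (\<Sum>i\<in>I. of_int (c i) *\<^sub>R alpha i)"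
  by (rule root_expansion_height) auto

lemma height_Ints: "b \<in> R \<Longrightarrow> height b \<in> \<int>"
proof -
  assume "b \<in> R"
  then obtain c :: "'i\<Rightarrow>int" where "b = (\<Sum>i\<in>I. of_int (c i) *\<^sub>R alpha i)"
    using root_expansion by blast
  then have "height b = (\<Sum>i\<in>I. real_of_int (c i))"
    using height_sum by simp
  then show ?thesis
    by (metis Ints_of_int of_int_sum)
qed

lemma pos_roots_eq: "pos_roots R I alpha = {b \<in> R. height b > 0}"
proof -
  have "height b > 0" if "b \<in> R" "\<forall>i\<in>I. c i \<ge> 0" "b = (\<Sum>i\<in>I. of_int (c i) *\<^sub>R alpha i)"
    for b and c :: "'i \<Rightarrow> int"
  proof -
    have "height b = (\<Sum>i\<in>I. real_of_int (c i))"
      using that(3) height_sum by simp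
    also have "\<dots> \<ge> 0"
      using that(2) by (intro sum_nonneg) auto
    finally show ?thesis
      using height_nonzero[OF that(1)] by linarith
  qed
  then show ?thesis
    unfolding pos_roots_def using pos_root_expansion by blast
qed

lemma height_refl_simple_pos:
  assumes i: "i \<in> I" and g: "g \<in> R" "height g > 0" "g \<noteq> alpha i"
  shows "height (refl (alpha i) g) > 0"
proof (rule ccontr)
  let ?g' = "refl (alpha i) g"
  assume "\<not> ?thesis"
  moreover have g'R: "?g' \<in> R"
    using refl_root simple_root i g by blast
  ultimately have "height ?g' < 0"
    using height_nonzero by force
  obtain c :: "'i\<Rightarrow>int" where c: "\<forall>m\<in>I. c m \<ge> 0" "g = (\<Sum>m\<in>I. of_int (c m) *\<^sub>R alpha m)"
    using pos_root_expansion g by blast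
  obtain e :: "'i\<Rightarrow>int" where e: "\<forall>m\<in>I. e m \<le> 0" "?g' = (\<Sum>m\<in>I. of_int (e m) *\<^sub>R alpha m)"
    using neg_root_expansion[OF g'R \<open>height ?g' < 0\<close>] by blast
  define p where "p = pairing g (alpha i)"
  have "(\<Sum>m\<in>I. (if m = i then p else 0) *\<^sub>R alpha m) = p *\<^sub>R alpha i"
    using i finite_I by (simp add: if_distrib[of "\<lambda>t. t *\<^sub>R _"] sum.delta cong: if_cong)
  then have "(\<Sum>m\<in>I. (of_int (c m) - (if m = i then p else 0)) *\<^sub>R alpha m)
           = (\<Sum>m\<in>I. of_int (e m) *\<^sub>R alpha m)"
    using c(2) e(2) by (simp add: refl_eq_pairing p_def scaleR_diff_left sum_subtractf)
  note coeffs = simple_coeffs_unique[OF this]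
  have "c m = 0" if "m \<in> I" "m \<noteq> i" for m
  proof -
    have "c m = e m"
      using coeffs[OF that(1)] that(2) by simp
    then show ?thesis
      using that(1) c(1) e(1) by force
  qed
  then have "(\<Sum>m\<in>I - {i}. of_int (c m) *\<^sub>R alpha m) = 0"
    by (intro sum.neutral) auto
  moreover have "g = of_int (c i) *\<^sub>R alpha i + (\<Sum>m\<in>I - {i}. of_int (c m) *\<^sub>R alpha m)"
    using c(2) sum.remove[OF finite_I i] by simp
  ultimately have g_eq: "g = real_of_int (c i) *\<^sub>R alpha i"
    by simp
  then have "real_of_int (c i) = 1 \<or> real_of_int (c i) = -1"
    using root_multiple simple_root i g(1) by metis
  then show False
    using g_eq g(2,3) i by (auto simp: height_scaleR)
qed

lemma height_refl_simple_neg: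
  "i \<in> I \<Longrightarrow> g \<in> R \<Longrightarrow> height g > 0 \<Longrightarrow> height (refl (alpha i) g) < 0 \<Longrightarrow> g = alpha i"
  using height_refl_simple_pos by force

section \<open>Inversion sets and length\<close>

lemma word_root: "set is \<subseteq> I \<Longrightarrow> a \<in> R \<Longrightarrow> word alpha is a \<in> R"
  by (induction "is") (auto intro: refl_root simple_root)

lemma word_inner_word_simple: "set is \<subseteq> I \<Longrightarrow> word alpha is x \<bullet> word alpha is y = x \<bullet> y"
  by (rule word_inner_word) (use simple_nonzero in blast)

lemma word_rev_word_simple:
  "set is \<subseteq> I \<Longrightarrow> word alpha is (word alpha (rev is) x) = x"
  "set is \<subseteq> I \<Longrightarrow> word alpha (rev is) (word alpha is x) = x"
  using word_rev_word[of "is" alpha x] word_rev_word[of "rev is" alpha x] simple_nonzero by auto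

lemma inj_word: "set is \<subseteq> I \<Longrightarrow> inj (word alpha is)"
  by (metis injI word_rev_word_simple(2))

definition inversions :: "('a \<Rightarrow> 'a) \<Rightarrow> 'a set" where
  "inversions x = {a \<in> R. height a > 0 \<and> height (x a) < 0}"

lemma finite_inversions: "finite (inversions x)"
  using finite_roots by (simp add: inversions_def)

lemma card_inversions_refl_left:
  assumes s: "set is \<subseteq> I" and i: "i \<in> I"
  shows "card (inversions (refl (alpha i) \<circ> word alpha is)) \<le> card (inversions (word alpha is)) + 1"
proof -
  let ?x = "word alpha is"
  have sub: "inversions (refl (alpha i) \<circ> ?x) \<subseteq> inversions ?x \<union> {a \<in> R. ?x a = alpha i}"
  proof
    fix a assume a: "a \<in> inversions (refl (alpha i) \<circ> ?x)"
    then have aR: "a \<in> R" "height a > 0" "height (refl (alpha i) (?x a)) < 0"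
      by (auto simp: inversions_def)
    have xa: "?x a \<in> R"
      using word_root s aR by blast
    show "a \<in> inversions ?x \<union> {a \<in> R. ?x a = alpha i}"
    proof (cases "height (?x a) < 0")
      case True
      then show ?thesis
        using aR by (simp add: inversions_def)
    next
      case False
      then have "height (?x a) > 0"
        using height_nonzero[OF xa] by linarith
      then have "?x a = alpha i"
        using height_refl_simple_neg[OF i xa] aR(3) by blast
      then show ?thesis
        using aR by simp
    qed
  qed
  have "card (inversions (refl (alpha i) \<circ> ?x)) \<le> card (inversions ?x \<union> {a \<in> R. ?x a = alpha i})"
    by (rule card_mono[OF _ sub]) (use finite_roots finite_inversions in auto)
  also have "\<dots> \<le> card (inversions ?x) + card {a \<in> R. ?x a = alpha i}"
    by (rule card_Un_le)
  also have "card {a \<in> R. ?x a = alpha i} \<le> 1"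
    using inj_word[OF s] finite_roots by (auto simp: card_le_Suc0_iff_eq inj_def)
  finally show ?thesis
    by simp
qed

lemma card_inversions_le_length: "set is \<subseteq> I \<Longrightarrow> card (inversions (word alpha is)) \<le> length is"
proof (induction "is")
  case Nil
  have "inversions id = {}"
    by (auto simp: inversions_def)
  then show ?case
    by (simp add: id_def)
next
  case (Cons i "is")
  then have "card (inversions (word alpha (i # is))) \<le> card (inversions (word alpha is)) + 1"
    using card_inversions_refl_left by simp
  then show ?case
    using Cons by (simp add: comp_def)
qed

lemma inversions_refl_right:
  assumes i: "i \<in> I" and x: "linear x"
  shows "inversions (x \<circ> refl (alpha i)) - {alpha i} = refl (alpha i) ` (inversions x - {alpha i})"
    and "alpha i \<in> inversions (x \<circ> refl (alpha i)) \<longleftrightarrow> height (x (alpha i)) > 0"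
    and "alpha i \<in> inversions x \<longleftrightarrow> height (x (alpha i)) < 0"
proof -
  let ?s = "refl (alpha i)"
  have nz: "alpha i \<noteq> 0"
    using simple_nonzero i by simp
  have s_pos: "?s a \<in> R \<and> height (?s a) > 0 \<and> ?s a \<noteq> alpha i"
    if "a \<in> R" "height a > 0" "a \<noteq> alpha i" for a
  proof -
    have "?s a \<noteq> alpha i"
    proof
      assume "?s a = alpha i"
      then have "a = - alpha i"
        using refl_refl[OF nz, of a] refl_self[OF nz] by metis
      then show False
        using that(2) i by (simp add: height_uminus)
    qed
    then show ?thesis
      using that refl_root simple_root i height_refl_simple_pos by blast
  qed
  show "inversions (x \<circ> ?s) - {alpha i} = ?s ` (inversions x - {alpha i})"
  proof
    show "inversions (x \<circ> ?s) - {alpha i} \<subseteq> ?s ` (inversions x - {alpha i})"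
    proof
      fix a assume "a \<in> inversions (x \<circ> ?s) - {alpha i}"
      then have a: "a \<in> R" "height a > 0" "a \<noteq> alpha i" "height (x (?s a)) < 0"
        by (auto simp: inversions_def)
      then have "?s a \<in> inversions x - {alpha i}"
        using s_pos[OF a(1-3)] by (simp add: inversions_def)
      moreover have "a = ?s (?s a)"
        using nz by simp
      ultimately show "a \<in> ?s ` (inversions x - {alpha i})"
        by blast
    qed
    show "?s ` (inversions x - {alpha i}) \<subseteq> inversions (x \<circ> ?s) - {alpha i}"
    proof
      fix a assume "a \<in> ?s ` (inversions x - {alpha i})"
      then obtain b where b: "b \<in> R" "height b > 0" "b \<noteq> alpha i" "height (x b) < 0" "a = ?s b"
        by (auto simp: inversions_def)
      then show "a \<in> inversions (x \<circ> ?s) - {alpha i}"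
        using s_pos[OF b(1-3)] nz by (simp add: inversions_def)
    qed
  qed
  show "alpha i \<in> inversions (x \<circ> ?s) \<longleftrightarrow> height (x (alpha i)) > 0"
    using simple_root i refl_self[OF nz] linear_neg[OF x] by (simp add: inversions_def height_uminus)
  show "alpha i \<in> inversions x \<longleftrightarrow> height (x (alpha i)) < 0"
    using simple_root i by (simp add: inversions_def)
qed

lemma card_inversions_refl_right:
  assumes i: "i \<in> I" and x: "linear x"
  shows "height (x (alpha i)) > 0 \<Longrightarrow> card (inversions (x \<circ> refl (alpha i))) = card (inversions x) + 1"
    and "height (x (alpha i)) < 0 \<Longrightarrow> card (inversions (x \<circ> refl (alpha i))) + 1 = card (inversions x)"
proof -
  let ?A = "inversions (x \<circ> refl (alpha i))" and ?B = "inversions x"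
  have eq: "card (?A - {alpha i}) = card (?B - {alpha i})"
    using inversions_refl_right(1)[OF i x]
      card_image[OF inj_on_subset[OF inj_refl[OF simple_nonzero[OF i]]]] by simp
  show "card ?A = card ?B + 1" if "height (x (alpha i)) > 0"
  proof -
    have "alpha i \<in> ?A" "alpha i \<notin> ?B"
      using that inversions_refl_right(2,3)[OF i x] by auto
    moreover have "card ?A = Suc (card (?A - {alpha i}))"
      using card.remove[OF finite_inversions] calculation by blast
    ultimately show ?thesis
      using eq by simp
  qed
  show "card ?A + 1 = card ?B" if "height (x (alpha i)) < 0"
  proof -
    have "alpha i \<notin> ?A" "alpha i \<in> ?B"
      using that inversions_refl_right(2,3)[OF i x] by auto
    moreover have "card ?B = Suc (card (?B - {alpha i}))"
      using card.remove[OF finite_inversions] calculation by blast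
    ultimately show ?thesis
      using eq by simp
  qed
qed

lemma word_deletion:
  assumes "set is \<subseteq> I" "i \<in> I" "height (word alpha is (alpha i)) < 0"
  shows "\<exists>js. set js \<subseteq> I \<and> length js < length is \<and> word alpha js = word alpha is \<circ> refl (alpha i)"
  using assms
proof (induction "is")
  case Nil
  then show ?case
    by simp
next
  case (Cons k "is")
  let ?x = "word alpha is"
  have k: "k \<in> I" and s: "set is \<subseteq> I"
    using Cons.prems by auto
  have xR: "?x (alpha i) \<in> R"
    using word_root[OF s simple_root[OF Cons.prems(2)]] .
  show ?case
  proof (cases "height (?x (alpha i)) < 0")
    case True
    then obtain js where "set js \<subseteq> I" "length js < length is" "word alpha js = ?x \<circ> refl (alpha i)"
      using Cons.IH[OF s Cons.prems(2)] by blast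
    then show ?thesis
      using k by (intro exI[of _ "k # js"]) (auto simp: comp_assoc)
  next
    case False
    then have "height (?x (alpha i)) > 0"
      using height_nonzero[OF xR] by linarith
    then have "?x (alpha i) = alpha k"
      using height_refl_simple_neg[OF k xR] Cons.prems(3) by simp
    then have "refl (alpha k) (?x y) = ?x (refl (alpha i) y)" for y
      using refl_conj[OF linear_word word_inner_word_simple[OF s]] by metis
    then have "word alpha (k # is) \<circ> refl (alpha i) = ?x"
      using simple_nonzero[OF k] simple_nonzero[OF Cons.prems(2)] by (simp add: fun_eq_iff)
    then have "word alpha is = word alpha (k # is) \<circ> refl (alpha i)"
      by (rule sym)
    then show ?thesis
      by (intro exI[of _ "is"] conjI) (rule s, simp, assumption)
  qed
qed

lemma word_reduce:
  "set is \<subseteq> I \<Longrightarrow>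
    \<exists>js. set js \<subseteq> I \<and> length js \<le> card (inversions (word alpha is)) \<and> word alpha js = word alpha is"
proof (induction "is" rule: rev_induct)
  case Nil
  then show ?case
    by (intro exI[of _ "[]"]) simp
next
  case (snoc i "is")
  have i: "i \<in> I" and s: "set is \<subseteq> I"
    using snoc.prems by auto
  let ?x = "word alpha is"
  obtain js where js: "set js \<subseteq> I" "length js \<le> card (inversions ?x)" "word alpha js = ?x"
    using snoc.IH[OF s] by blast
  have snoc_eq: "word alpha (is @ [i]) = ?x \<circ> refl (alpha i)"
    by (simp add: word_append)
  have xR: "?x (alpha i) \<in> R"
    using word_root[OF s simple_root[OF i]] .
  show ?case
  proof (cases "height (?x (alpha i)) > 0")
    case True
    then have "card (inversions (word alpha (is @ [i]))) = card (inversions ?x) + 1"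
      unfolding snoc_eq by (rule card_inversions_refl_right(1)[OF i linear_word])
    moreover have "word alpha (js @ [i]) = word alpha (is @ [i])"
      unfolding snoc_eq by (simp add: word_append js(3))
    ultimately show ?thesis
      using js i by (intro exI[of _ "js @ [i]"]) simp
  next
    case False
    then have neg: "height (?x (alpha i)) < 0"
      using height_nonzero[OF xR] by linarith
    then have card_eq: "card (inversions (word alpha (is @ [i]))) + 1 = card (inversions ?x)"
      unfolding snoc_eq by (rule card_inversions_refl_right(2)[OF i linear_word])
    obtain ks where ks: "set ks \<subseteq> I" "length ks < length js"
      "word alpha ks = word alpha js \<circ> refl (alpha i)"
      using word_deletion[OF js(1) i] neg js(3) by auto
    have "length ks \<le> card (inversions (word alpha (is @ [i])))"
      using card_eq ks(2) js(2) by linarith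
    moreover have "word alpha ks = word alpha (is @ [i])"
      unfolding snoc_eq ks(3) js(3) ..
    ultimately show ?thesis
      using ks(1) by blast
  qed
qed

lemma wlen_word: "set is \<subseteq> I \<Longrightarrow> wlen alpha I (word alpha is) = card (inversions (word alpha is))"
proof -
  assume s: "set is \<subseteq> I"
  define P where "P n \<longleftrightarrow> (\<exists>js. set js \<subseteq> I \<and> length js = n \<and> word alpha is = word alpha js)" for n
  have wlen_eq: "wlen alpha I (word alpha is) = (LEAST n. P n)"
    unfolding wlen_def P_def ..
  obtain js where js: "set js \<subseteq> I" "length js \<le> card (inversions (word alpha is))"
    "word alpha js = word alpha is"
    using word_reduce[OF s] by blast
  then have "P (length js)"
    unfolding P_def by metis
  then have "(LEAST n. P n) \<le> card (inversions (word alpha is))"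
    using Least_le[of P "length js"] js(2) by linarith
  moreover have "P (length is)"
    using s unfolding P_def by blast
  then have "P (LEAST n. P n)"
    by (rule LeastI)
  then obtain ms where "set ms \<subseteq> I" "length ms = (LEAST n. P n)" "word alpha is = word alpha ms"
    unfolding P_def by blast
  then have "card (inversions (word alpha is)) \<le> (LEAST n. P n)"
    using card_inversions_le_length[of ms] by simp
  ultimately show ?thesis
    using wlen_eq by simp
qed

lemma in_weyl_gen_iff: "x \<in> weyl_gen alpha K \<longleftrightarrow> (\<exists>is. set is \<subseteq> K \<and> x = word alpha is)"
  by (auto simp: weyl_gen_def)

lemma weyl_gen_comp: "x \<in> weyl_gen alpha K \<Longrightarrow> y \<in> weyl_gen alpha K \<Longrightarrow> x \<circ> y \<in> weyl_gen alpha K"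
  unfolding in_weyl_gen_iff by (metis set_append Un_subset_iff word_append)

lemma refl_simple_in_weyl_gen: "i \<in> K \<Longrightarrow> refl (alpha i) \<in> weyl_gen alpha K"
  unfolding in_weyl_gen_iff by (intro exI[of _ "[i]"]) auto

lemma id_in_weyl_gen: "id \<in> weyl_gen alpha K"
  unfolding in_weyl_gen_iff by (intro exI[of _ "[]"]) auto

lemma weyl_gen_mono: "K \<subseteq> K' \<Longrightarrow> weyl_gen alpha K \<subseteq> weyl_gen alpha K'"
  unfolding weyl_gen_def by auto

lemma weyl_gen_inverse:
  assumes "K \<subseteq> I" and "x \<in> weyl_gen alpha K"
  obtains y where "y \<in> weyl_gen alpha K" "\<And>z. x (y z) = z" "\<And>z. y (x z) = z"
proof -
  obtain "is" where s: "set is \<subseteq> K" "x = word alpha is"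
    using assms(2) unfolding in_weyl_gen_iff by blast
  then have sI: "set is \<subseteq> I"
    using assms(1) by blast
  show ?thesis
  proof (rule that)
    show "word alpha (rev is) \<in> weyl_gen alpha K"
      unfolding in_weyl_gen_iff using s(1) by (intro exI[of _ "rev is"]) auto
    show "x (word alpha (rev is) z) = z" "word alpha (rev is) (x z) = z" for z
      unfolding s(2) using word_rev_word_simple[OF sI] by simp_all
  qed
qed

abbreviation W :: "('a \<Rightarrow> 'a) set" where
  "W \<equiv> weyl_gen alpha I"

lemma linear_W: "x \<in> W \<Longrightarrow> linear x"
  using linear_word by (auto simp: in_weyl_gen_iff)

lemma W_inner: "x \<in> W \<Longrightarrow> x a \<bullet> x b = a \<bullet> b"
  using word_inner_word_simple by (auto simp: in_weyl_gen_iff)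

lemma W_root: "x \<in> W \<Longrightarrow> a \<in> R \<Longrightarrow> x a \<in> R"
  using word_root by (auto simp: in_weyl_gen_iff)

lemma inj_W: "x \<in> W \<Longrightarrow> inj x"
  using inj_word by (auto simp: in_weyl_gen_iff)

lemma W_image_roots: "x \<in> W \<Longrightarrow> x ` R = R"
proof -
  assume x: "x \<in> W"
  then obtain y where y: "y \<in> W" "\<And>z. x (y z) = z" "\<And>z. y (x z) = z"
    by (metis weyl_gen_inverse[OF order_refl])
  show ?thesis
  proof
    show "x ` R \<subseteq> R"
      using W_root[OF x] by blast
    show "R \<subseteq> x ` R"
    proof
      fix a assume "a \<in> R"
      then have "y a \<in> R"
        using W_root[OF y(1)] by blast
      then show "a \<in> x ` R"
        using y(2)[of a] by (metis image_eqI)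
    qed
  qed
qed

lemma wlen_W: "x \<in> W \<Longrightarrow> wlen alpha I x = card (inversions x)"
  using wlen_word by (auto simp: in_weyl_gen_iff)

lemma W_uminus: "x \<in> W \<Longrightarrow> x (- a) = - x a"
  using linear_W linear_neg by blast

lemma refl_W_conj: "x \<in> W \<Longrightarrow> refl (x a) (x y) = x (refl a y)"
  by (rule refl_conj[OF linear_W W_inner])

lemma pos_root_inner_simple_pos:
  assumes b: "b \<in> R" "height b > 0"
  obtains i where "i \<in> I" "b \<bullet> alpha i > 0"
proof -
  have "\<exists>i\<in>I. b \<bullet> alpha i > 0"
  proof (rule ccontr)
    assume "\<not> ?thesis"
    then have nonpos: "\<forall>i\<in>I. b \<bullet> alpha i \<le> 0"
      by auto
    obtain c :: "'i \<Rightarrow> int" where c: "\<forall>i\<in>I. c i \<ge> 0" "b = (\<Sum>i\<in>I. of_int (c i) *\<^sub>R alpha i)"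
      using pos_root_expansion b by blast
    have "b \<bullet> b = (\<Sum>i\<in>I. of_int (c i) * (b \<bullet> alpha i))"
      by (subst (2) c(2)) (simp add: inner_sum_right)
    also have "\<dots> \<le> 0"
      using c(1) nonpos by (intro sum_nonpos) (simp add: mult_nonneg_nonpos)
    finally show False
      using inner_root_pos b by fastforce
  qed
  then show thesis
    using that by blast
qed

lemma height_refl_simple_le:
  assumes i: "i \<in> I" and b: "b \<in> R" "b \<bullet> alpha i > 0"
  shows "height (refl (alpha i) b) \<le> height b - 1"
proof -
  define p where "p = pairing b (alpha i)"
  have "p > 0"
    using b(2) inner_root_pos[OF simple_root[OF i]] by (simp add: p_def pairing_def)
  moreover have "p \<in> \<int>"
    using pairing_root_Ints[OF simple_root[OF i] b(1)] by (simp add: p_def)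
  ultimately have "p \<ge> 1"
    by (auto elim: Ints_cases)
  moreover have "height (refl (alpha i) b) = height b - p"
    using i by (simp add: refl_eq_pairing height_diff height_scaleR p_def)
  ultimately show ?thesis
    by linarith
qed

text \<open>Induction on the height: a non-simple positive root is moved to a positive root of
  smaller height by some simple reflection.\<close>

lemma pos_root_W_simple:
  assumes "b \<in> R" "height b > 0"
  shows "\<exists>y\<in>W. \<exists>i\<in>I. y (alpha i) = b"
proof -
  have "b \<in> R \<Longrightarrow> height b > 0 \<Longrightarrow> nat \<lfloor>height b\<rfloor> = n \<Longrightarrow> \<exists>y\<in>W. \<exists>i\<in>I. y (alpha i) = b" for n
  proof (induction n arbitrary: b rule: less_induct)
    case (less n)
    show ?case
    proof (cases "\<exists>i\<in>I. b = alpha i")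
      case True
      then obtain i where "i \<in> I" "b = alpha i"
        by blast
      then show ?thesis
        using id_in_weyl_gen[of I] by (intro bexI[of _ id]) auto
    next
      case False
      obtain i where i: "i \<in> I" "b \<bullet> alpha i > 0"
        using pos_root_inner_simple_pos less.prems by blast
      let ?b' = "refl (alpha i) b"
      have b'R: "?b' \<in> R"
        using refl_root simple_root i less.prems by blast
      have b'pos: "height ?b' > 0"
        using height_refl_simple_pos[OF i(1)] less.prems False i by blast
      obtain k k' :: int where "height b = of_int k" "height ?b' = of_int k'"
        using height_Ints less.prems(1) b'R by (metis Ints_cases)
      moreover have "height ?b' \<le> height b - 1"
        using height_refl_simple_le[OF i(1) less.prems(1) i(2)] .
      ultimately have "nat \<lfloor>height ?b'\<rfloor> < n"
        using b'pos less.prems(3) by simp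
      then obtain y j where y: "y \<in> W" "j \<in> I" "y (alpha j) = ?b'"
        using less.IH b'R b'pos by blast
      have "(refl (alpha i) \<circ> y) (alpha j) = b"
        using y simple_nonzero[OF i(1)] by simp
      moreover have "refl (alpha i) \<circ> y \<in> W"
        using weyl_gen_comp refl_simple_in_weyl_gen i y by blast
      ultimately show ?thesis
        using y by blast
    qed
  qed
  then show ?thesis
    using assms by blast
qed

lemma refl_in_W:
  assumes "b \<in> R"
  shows "refl b \<in> W"
proof -
  have pos: "refl b \<in> W" if b: "b \<in> R" "height b > 0" for b
  proof -
    obtain y i where y: "y \<in> W" "i \<in> I" "y (alpha i) = b"
      using pos_root_W_simple b by blast
    obtain y' where y': "y' \<in> W" "\<And>z. y (y' z) = z" "\<And>z. y' (y z) = z"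
      by (metis weyl_gen_inverse[OF order_refl y(1)])
    have "refl b = y \<circ> refl (alpha i) \<circ> y'"
    proof
      fix z
      have "refl b z = refl (y (alpha i)) (y (y' z))"
        using y y' by simp
      also have "\<dots> = y (refl (alpha i) (y' z))"
        using refl_W_conj[OF y(1)] .
      finally show "refl b z = (y \<circ> refl (alpha i) \<circ> y') z"
        by simp
    qed
    then show ?thesis
      using weyl_gen_comp refl_simple_in_weyl_gen y y' by metis
  qed
  show ?thesis
  proof (cases "height b > 0")
    case False
    then have "height (- b) > 0"
      using height_nonzero[OF assms] height_uminus by force
    then have "refl (- b) \<in> W"
      using pos assms uminus_root by blast
    then show ?thesis
      by (simp add: refl_uminus)
  qed (use pos assms in blast)
qed

end

locale dominant_weight = root_base R I alpha
  for R :: "'a::euclidean_space set" and I :: "'i set" and alpha +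
  fixes Lam :: 'a
  assumes dominant: "\<forall>i\<in>I. \<exists>m::nat. pairing Lam (alpha i) = real m"
begin

abbreviation J :: "'i set" where
  "J \<equiv> Jset alpha I Lam"

abbreviation W_J :: "('a \<Rightarrow> 'a) set" where
  "W_J \<equiv> weyl_gen alpha J"

lemma J_subset: "J \<subseteq> I"
  by (auto simp: Jset_def)

lemma W_J_subset: "W_J \<subseteq> W"
  using weyl_gen_mono[OF J_subset] .

lemma inner_Lam_simple_nonneg: "i \<in> I \<Longrightarrow> Lam \<bullet> alpha i \<ge> 0"
proof -
  assume i: "i \<in> I"
  obtain m :: nat where "pairing Lam (alpha i) = real m"
    using dominant i by blast
  then have "2 * (Lam \<bullet> alpha i) / (alpha i \<bullet> alpha i) \<ge> 0"
    by (simp add: pairing_def)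
  then show ?thesis
    using inner_root_pos[OF simple_root[OF i]] by (simp add: zero_le_divide_iff)
qed

lemma in_J_iff: "j \<in> J \<longleftrightarrow> j \<in> I \<and> Lam \<bullet> alpha j = 0"
  using inner_root_pos[OF simple_root] by (auto simp: Jset_def pairing_def)

lemma inner_Lam_simple_pos: "i \<in> I \<Longrightarrow> i \<notin> J \<Longrightarrow> Lam \<bullet> alpha i > 0"
  using inner_Lam_simple_nonneg[of i] in_J_iff[of i] by linarith

lemma inner_Lam_expansion:
  "Lam \<bullet> (\<Sum>i\<in>I. of_int (c i) *\<^sub>R alpha i) = (\<Sum>i\<in>I. of_int (c i) * (Lam \<bullet> alpha i))"
  by (simp add: inner_sum_right)

lemma inner_Lam_pos_root: "a \<in> R \<Longrightarrow> height a > 0 \<Longrightarrow> Lam \<bullet> a \<ge> 0"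
proof -
  assume "a \<in> R" "height a > 0"
  then obtain c :: "'i\<Rightarrow>int" where c: "\<forall>i\<in>I. c i \<ge> 0" "a = (\<Sum>i\<in>I. of_int (c i) *\<^sub>R alpha i)"
    using pos_root_expansion by blast
  show ?thesis
    unfolding c(2) inner_Lam_expansion using c(1) inner_Lam_simple_nonneg by (intro sum_nonneg) simp
qed

lemma inner_Lam_neg_root: "a \<in> R \<Longrightarrow> height a < 0 \<Longrightarrow> Lam \<bullet> a \<le> 0"
proof -
  assume "a \<in> R" "height a < 0"
  then obtain c :: "'i\<Rightarrow>int" where c: "\<forall>i\<in>I. c i \<le> 0" "a = (\<Sum>i\<in>I. of_int (c i) *\<^sub>R alpha i)"
    using neg_root_expansion by blast
  show ?thesis
    unfolding c(2) inner_Lam_expansion using c(1) inner_Lam_simple_nonneg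
    by (intro sum_nonpos) (simp add: mult_nonpos_nonneg)
qed

lemma height_pos_if_inner_Lam_pos: "a \<in> R \<Longrightarrow> Lam \<bullet> a > 0 \<Longrightarrow> height a > 0"
  using inner_Lam_neg_root[of a] height_nonzero[of a] by linarith

lemma Lam_orthogonal_root_expansion:
  assumes "a \<in> R" "height a > 0" "Lam \<bullet> a = 0"
  obtains c :: "'i\<Rightarrow>int" where "\<forall>i\<in>I. c i \<ge> 0" "\<forall>i\<in>I. i \<notin> J \<longrightarrow> c i = 0"
    "a = (\<Sum>i\<in>I. of_int (c i) *\<^sub>R alpha i)"
proof -
  obtain c :: "'i\<Rightarrow>int" where c: "\<forall>i\<in>I. c i \<ge> 0" "a = (\<Sum>i\<in>I. of_int (c i) *\<^sub>R alpha i)"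
    using pos_root_expansion assms by blast
  define f where "f i = real_of_int (c i) * (Lam \<bullet> alpha i)" for i
  have "sum f I = 0"
    using assms(3) unfolding f_def c(2) inner_Lam_expansion by linarith
  moreover have "\<forall>i\<in>I. f i \<ge> 0"
    unfolding f_def using c(1) inner_Lam_simple_nonneg by simp
  ultimately have "\<forall>i\<in>I. f i = 0"
    using sum_nonneg_eq_0_iff[OF finite_I, of f] by blast
  then have "\<forall>i\<in>I. i \<notin> J \<longrightarrow> c i = 0"
    using inner_Lam_simple_pos unfolding f_def by fastforce
  then show ?thesis
    using that c by blast
qed

lemma word_J_fixes_Lam: "set is \<subseteq> J \<Longrightarrow> word alpha is Lam = Lam"
proof (induction "is")
  case (Cons j "is")
  then have "pairing Lam (alpha j) = 0"
    using in_J_iff by (auto simp: pairing_def)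
  then show ?case
    using Cons by (simp add: refl_eq_pairing)
qed simp

lemma W_J_fixes_Lam: "v \<in> W_J \<Longrightarrow> v Lam = Lam"
  using word_J_fixes_Lam by (auto simp: in_weyl_gen_iff)

lemma inner_Lam_W_J: "v \<in> W_J \<Longrightarrow> Lam \<bullet> v a = Lam \<bullet> a"
  using W_inner[of v Lam a] W_J_subset W_J_fixes_Lam[of v] by auto

lemma pos_roots_diff_J_eq: "pos_roots R I alpha - pos_roots_J R I alpha J = {a \<in> R. Lam \<bullet> a > 0}"
proof
  show "pos_roots R I alpha - pos_roots_J R I alpha J \<subseteq> {a \<in> R. Lam \<bullet> a > 0}"
  proof
    fix a assume a: "a \<in> pos_roots R I alpha - pos_roots_J R I alpha J"
    then have aR: "a \<in> R" "height a > 0"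
      by (auto simp: pos_roots_eq)
    have "Lam \<bullet> a \<noteq> 0"
    proof
      assume "Lam \<bullet> a = 0"
      then obtain c :: "'i\<Rightarrow>int" where c: "\<forall>i\<in>I. i \<notin> J \<longrightarrow> c i = 0"
        "a = (\<Sum>i\<in>I. of_int (c i) *\<^sub>R alpha i)"
        using Lam_orthogonal_root_expansion aR by metis
      then have "a = (\<Sum>i\<in>J. of_int (c i) *\<^sub>R alpha i)"
        by (simp add: sum.mono_neutral_right[OF finite_I J_subset])
      then have "a \<in> pos_roots_J R I alpha J"
        using a by (auto simp: pos_roots_J_def)
      then show False
        using a by simp
    qed
    then show "a \<in> {a \<in> R. Lam \<bullet> a > 0}"
      using inner_Lam_pos_root aR by force
  qed
  show "{a \<in> R. Lam \<bullet> a > 0} \<subseteq> pos_roots R I alpha - pos_roots_J R I alpha J"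
  proof
    fix a assume a: "a \<in> {a \<in> R. Lam \<bullet> a > 0}"
    then have "a \<in> pos_roots R I alpha"
      using height_pos_if_inner_Lam_pos by (auto simp: pos_roots_eq)
    moreover have "a \<notin> pos_roots_J R I alpha J"
    proof
      assume "a \<in> pos_roots_J R I alpha J"
      then obtain c :: "'i\<Rightarrow>int" where "a = (\<Sum>j\<in>J. of_int (c j) *\<^sub>R alpha j)"
        by (auto simp: pos_roots_J_def)
      then have "Lam \<bullet> a = (\<Sum>j\<in>J. of_int (c j) * (Lam \<bullet> alpha j))"
        by (simp add: inner_sum_right)
      also have "\<dots> = 0"
        using in_J_iff by (intro sum.neutral) auto
      finally show False
        using a by simp
    qed
    ultimately show "a \<in> pos_roots R I alpha - pos_roots_J R I alpha J"
      by blast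
  qed
qed

section \<open>Minimal coset representatives\<close>

lemma height_pos_Lam_orthogonal:
  assumes u: "u \<in> W" "\<forall>k\<in>J. height (u (alpha k)) > 0"
    and a: "a \<in> R" "height a > 0" "Lam \<bullet> a = 0"
  shows "height (u a) > 0"
proof -
  obtain c :: "'i\<Rightarrow>int" where c: "\<forall>i\<in>I. c i \<ge> 0" "\<forall>i\<in>I. i \<notin> J \<longrightarrow> c i = 0"
    "a = (\<Sum>i\<in>I. of_int (c i) *\<^sub>R alpha i)"
    using Lam_orthogonal_root_expansion[OF a] by blast
  have "u a = (\<Sum>i\<in>I. of_int (c i) *\<^sub>R u (alpha i))"
    unfolding c(3) using linear_W[OF u(1)] by (simp add: linear_sum linear_scale)
  then have "height (u a) = (\<Sum>i\<in>I. of_int (c i) * height (u (alpha i)))"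
    using linear_height by (simp add: linear_sum height_scaleR)
  also have "\<dots> \<ge> 0"
  proof (intro sum_nonneg)
    fix i assume i: "i \<in> I"
    show "of_int (c i) * height (u (alpha i)) \<ge> 0"
    proof (cases "i \<in> J")
      case True
      then show ?thesis
        using u(2) c(1) i by (simp add: order_less_imp_le)
    qed (use c(2) i in simp)
  qed
  finally show ?thesis
    using height_nonzero[OF W_root[OF u(1) a(1)]] by linarith
qed

text \<open>\<open>par_length x\<close> is \<open>\<ell>\<^sub>\<Lambda>(x) = \<ell>(\<lfloor>x\<rfloor>)\<close>, see \<open>wlen_minrep\<close>.\<close>

definition par_length :: "('a \<Rightarrow> 'a) \<Rightarrow> nat" where
  "par_length x = card {a \<in> R. Lam \<bullet> a > 0 \<and> height (x a) < 0}"

definition weight_depth :: "'a \<Rightarrow> nat" where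
  "weight_depth mu = card {e \<in> R. height e > 0 \<and> mu \<bullet> e < 0}"

lemma par_length_eq_weight_depth:
  assumes x: "x \<in> W"
  shows "par_length x = weight_depth (x Lam)"
proof -
  let ?A = "{a \<in> R. Lam \<bullet> a > 0 \<and> height (x a) < 0}"
    and ?B = "{e \<in> R. height e > 0 \<and> x Lam \<bullet> e < 0}"
  have inj: "inj_on (\<lambda>a. - x a) ?A"
    using inj_W[OF x] by (auto simp: inj_on_def inj_def)
  have "(\<lambda>a. - x a) ` ?A = ?B"
  proof
    show "(\<lambda>a. - x a) ` ?A \<subseteq> ?B"
    proof
      fix e assume "e \<in> (\<lambda>a. - x a) ` ?A"
      then obtain a where a: "a \<in> R" "Lam \<bullet> a > 0" "height (x a) < 0" "e = - x a"
        by blast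
      then show "e \<in> ?B"
        using W_root[OF x] uminus_root W_inner[OF x, of Lam a] by (simp add: height_uminus)
    qed
    show "?B \<subseteq> (\<lambda>a. - x a) ` ?A"
    proof
      fix e assume e: "e \<in> ?B"
      then have "- e \<in> x ` R"
        using uminus_root W_image_roots[OF x] by simp
      then obtain a where a: "a \<in> R" "x a = - e"
        by (metis imageE)
      have "Lam \<bullet> a = - (x Lam \<bullet> e)"
        using W_inner[OF x, of Lam a] a(2) by simp
      then have "a \<in> ?A"
        using e a by (simp add: height_uminus)
      moreover have "e = - x a"
        using a(2) by simp
      ultimately show "e \<in> (\<lambda>a. - x a) ` ?A"
        by blast
    qed
  qed
  then show ?thesis
    unfolding par_length_def weight_depth_def using card_image[OF inj] by simp
qed

lemma par_length_le_card_inversions: "par_length x \<le> card (inversions x)"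
  unfolding par_length_def inversions_def
  by (rule card_mono) (use finite_roots height_pos_if_inner_Lam_pos in auto)

lemma card_inversions_eq_par_length:
  assumes x: "x \<in> W" "\<forall>k\<in>J. height (x (alpha k)) > 0"
  shows "card (inversions x) = par_length x"
proof -
  have "inversions x = {a \<in> R. Lam \<bullet> a > 0 \<and> height (x a) < 0}"
  proof
    show "inversions x \<subseteq> {a \<in> R. Lam \<bullet> a > 0 \<and> height (x a) < 0}"
    proof
      fix a assume "a \<in> inversions x"
      then have a: "a \<in> R" "height a > 0" "height (x a) < 0"
        by (auto simp: inversions_def)
      then have "Lam \<bullet> a \<noteq> 0"
        using height_pos_Lam_orthogonal[OF x a(1,2)] by force
      then show "a \<in> {a \<in> R. Lam \<bullet> a > 0 \<and> height (x a) < 0}"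
        using inner_Lam_pos_root[OF a(1,2)] a by simp
    qed
  qed (use height_pos_if_inner_Lam_pos in \<open>auto simp: inversions_def\<close>)
  then show ?thesis
    by (simp add: par_length_def)
qed

lemma wlen_eq_0_imp_id: "v \<in> W \<Longrightarrow> wlen alpha I v = 0 \<Longrightarrow> v = id"
proof -
  assume v: "v \<in> W" and wlen0: "wlen alpha I v = 0"
  define P where "P n \<longleftrightarrow> (\<exists>is. set is \<subseteq> I \<and> length is = n \<and> v = word alpha is)" for n
  obtain js where "set js \<subseteq> I" "v = word alpha js"
    using v by (auto simp: in_weyl_gen_iff)
  then have "P (length js)"
    unfolding P_def by blast
  then have "P (LEAST n. P n)"
    by (rule LeastI)
  moreover have "(LEAST n. P n) = 0"
    using wlen0 unfolding wlen_def P_def .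
  ultimately show "v = id"
    unfolding P_def by auto
qed

abbreviation MR :: "('a \<Rightarrow> 'a) set" where
  "MR \<equiv> minreps alpha I J"

lemma minreps_height_simple_J_pos:
  assumes u: "u \<in> MR" and k: "k \<in> J"
  shows "height (u (alpha k)) > 0"
proof (rule ccontr)
  have uW: "u \<in> W" and min: "\<forall>v\<in>W_J. wlen alpha I u \<le> wlen alpha I (u \<circ> v)"
    using u by (auto simp: minreps_def)
  have kI: "k \<in> I"
    using k J_subset by blast
  assume "\<not> height (u (alpha k)) > 0"
  then have "height (u (alpha k)) < 0"
    using height_nonzero[OF W_root[OF uW simple_root[OF kI]]] by linarith
  then have "card (inversions (u \<circ> refl (alpha k))) + 1 = card (inversions u)"
    by (rule card_inversions_refl_right(2)[OF kI linear_W[OF uW]])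
  moreover have "u \<circ> refl (alpha k) \<in> W"
    using weyl_gen_comp[OF uW refl_simple_in_weyl_gen[OF kI]] .
  ultimately have "wlen alpha I (u \<circ> refl (alpha k)) < wlen alpha I u"
    using wlen_W uW by simp
  then show False
    using min refl_simple_in_weyl_gen[OF k] by force
qed

lemma minreps_iff: "u \<in> MR \<longleftrightarrow> u \<in> W \<and> (\<forall>k\<in>J. height (u (alpha k)) > 0)"
proof
  assume "u \<in> MR"
  then show "u \<in> W \<and> (\<forall>k\<in>J. height (u (alpha k)) > 0)"
    using minreps_height_simple_J_pos by (auto simp: minreps_def)
next
  assume u: "u \<in> W \<and> (\<forall>k\<in>J. height (u (alpha k)) > 0)"
  have "wlen alpha I u \<le> wlen alpha I (u \<circ> v)" if v: "v \<in> W_J" for v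
  proof -
    have uvW: "u \<circ> v \<in> W"
      using weyl_gen_comp u v W_J_subset by blast
    have "wlen alpha I u = par_length u"
      using wlen_W card_inversions_eq_par_length u by simp
    also have "\<dots> = weight_depth ((u \<circ> v) Lam)"
      using par_length_eq_weight_depth u W_J_fixes_Lam[OF v] by simp
    also have "\<dots> = par_length (u \<circ> v)"
      using par_length_eq_weight_depth uvW by simp
    also have "\<dots> \<le> wlen alpha I (u \<circ> v)"
      using par_length_le_card_inversions wlen_W uvW by simp
    finally show ?thesis .
  qed
  then show "u \<in> MR"
    using u by (auto simp: minreps_def)
qed

lemma minreps_W: "u \<in> MR \<Longrightarrow> u \<in> W"
  using minreps_iff by blast

text \<open>An element of \<open>W\<^sub>J\<close> linking two minimal representatives has no inversions: a positive
  root it made negative would be orthogonal to \<open>\<Lambda>\<close>, and both representatives keep such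
  roots positive.\<close>

lemma minreps_coset_unique:
  assumes z: "z1 \<in> MR" "z2 \<in> MR" and v: "v \<in> W_J" and eq: "z2 = z1 \<circ> v"
  shows "z1 = z2"
proof -
  have z1: "z1 \<in> W" "\<forall>k\<in>J. height (z1 (alpha k)) > 0"
    and z2: "z2 \<in> W" "\<forall>k\<in>J. height (z2 (alpha k)) > 0"
    using z minreps_iff by auto
  have vW: "v \<in> W"
    using v W_J_subset by blast
  have "inversions v = {}"
  proof (rule ccontr)
    assume "inversions v \<noteq> {}"
    then obtain a where a: "a \<in> R" "height a > 0" "height (v a) < 0"
      by (auto simp: inversions_def)
    have vaR: "v a \<in> R"
      using W_root[OF vW a(1)] .
    have "Lam \<bullet> v a = Lam \<bullet> a"
      using inner_Lam_W_J[OF v] .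
    then have Lam0: "Lam \<bullet> a = 0" "Lam \<bullet> (- v a) = 0"
      using inner_Lam_pos_root[OF a(1,2)] inner_Lam_neg_root[OF vaR a(3)] by auto
    have "height (z2 a) > 0"
      using height_pos_Lam_orthogonal[OF z2 a(1,2) Lam0(1)] .
    moreover have "height (z1 (- v a)) > 0"
      using height_pos_Lam_orthogonal[OF z1 uminus_root[OF vaR] _ Lam0(2)] a(3)
      by (simp add: height_uminus)
    moreover have "z2 a = - z1 (- v a)"
      using eq W_uminus[OF z1(1)] by simp
    ultimately show False
      by (simp add: height_uminus)
  qed
  then have "v = id"
    using wlen_eq_0_imp_id vW wlen_W[OF vW] by simp
  then show ?thesis
    using eq by simp
qed

lemma coset_has_minrep: "y \<in> W \<Longrightarrow> \<exists>v\<in>W_J. y \<circ> v \<in> MR"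
proof (induction "card (inversions y)" arbitrary: y rule: less_induct)
  case less
  show ?case
  proof (cases "\<exists>k\<in>J. height (y (alpha k)) \<le> 0")
    case True
    then obtain k where k: "k \<in> J" "height (y (alpha k)) \<le> 0"
      by blast
    have kI: "k \<in> I"
      using k J_subset by blast
    have "height (y (alpha k)) < 0"
      using height_nonzero[OF W_root[OF less.prems simple_root[OF kI]]] k(2) by linarith
    then have "card (inversions (y \<circ> refl (alpha k))) + 1 = card (inversions y)"
      by (rule card_inversions_refl_right(2)[OF kI linear_W[OF less.prems]])
    moreover have "y \<circ> refl (alpha k) \<in> W"
      using weyl_gen_comp refl_simple_in_weyl_gen kI less.prems by blast
    ultimately have "\<exists>v\<in>W_J. (y \<circ> refl (alpha k)) \<circ> v \<in> MR"
      using less.hyps by simp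
    then obtain v where v: "v \<in> W_J" "(y \<circ> refl (alpha k)) \<circ> v \<in> MR"
      by blast
    have "refl (alpha k) \<circ> v \<in> W_J"
      using weyl_gen_comp refl_simple_in_weyl_gen k v by blast
    moreover have "y \<circ> (refl (alpha k) \<circ> v) \<in> MR"
      using v by (simp add: comp_assoc)
    ultimately show ?thesis
      by blast
  next
    case False
    then have "y \<in> MR"
      using minreps_iff less.prems by force
    then show ?thesis
      using id_in_weyl_gen[of J] by (intro bexI[of _ id]) auto
  qed
qed

lemma minrep_unique:
  assumes y: "y \<in> W" and v: "v1 \<in> W_J" "v2 \<in> W_J" and m: "y \<circ> v1 \<in> MR" "y \<circ> v2 \<in> MR"
  shows "y \<circ> v1 = y \<circ> v2"
proof -
  obtain v1' where v1': "v1' \<in> W_J" "\<And>z. v1 (v1' z) = z" "\<And>z. v1' (v1 z) = z"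
    by (metis weyl_gen_inverse[OF J_subset v(1)])
  have "y \<circ> v2 = (y \<circ> v1) \<circ> (v1' \<circ> v2)"
    using v1' by (auto simp: fun_eq_iff)
  moreover have "v1' \<circ> v2 \<in> W_J"
    using weyl_gen_comp v1' v by blast
  ultimately show ?thesis
    using minreps_coset_unique m by metis
qed

lemma minrep_spec:
  assumes y: "y \<in> W"
  shows "minrep alpha I J y \<in> MR" and "\<exists>v\<in>W_J. minrep alpha I J y = y \<circ> v"
proof -
  obtain v where v: "v \<in> W_J" "y \<circ> v \<in> MR"
    using coset_has_minrep[OF y] by blast
  have "\<exists>!u. u \<in> MR \<and> (\<exists>v\<in>W_J. u = y \<circ> v)"
  proof (rule ex1I[of _ "y \<circ> v"])
    show "y \<circ> v \<in> MR \<and> (\<exists>v'\<in>W_J. y \<circ> v = y \<circ> v')"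
      using v by blast
    show "u = y \<circ> v" if u: "u \<in> MR \<and> (\<exists>v\<in>W_J. u = y \<circ> v)" for u
    proof -
      obtain v' where "v' \<in> W_J" "u = y \<circ> v'" "u \<in> MR"
        using u by blast
      then show ?thesis
        using minrep_unique[OF y] v by metis
    qed
  qed
  then have "minrep alpha I J y \<in> MR \<and> (\<exists>v\<in>W_J. minrep alpha I J y = y \<circ> v)"
    unfolding minrep_def by (rule theI')
  then show "minrep alpha I J y \<in> MR" and "\<exists>v\<in>W_J. minrep alpha I J y = y \<circ> v"
    by blast+
qed

lemma minrep_eq:
  assumes y: "y \<in> W" and z: "z \<in> MR" and v: "v \<in> W_J" and eq: "z = y \<circ> v"
  shows "minrep alpha I J y = z"
proof -
  obtain v' where "v' \<in> W_J" "minrep alpha I J y = y \<circ> v'"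
    using minrep_spec(2)[OF y] by blast
  then show ?thesis
    using minrep_unique[OF y _ v] minrep_spec(1)[OF y] z eq by metis
qed

lemma minrep_apply_Lam: "y \<in> W \<Longrightarrow> minrep alpha I J y Lam = y Lam"
  using minrep_spec(2) W_J_fixes_Lam by fastforce

lemma wlen_minreps: "u \<in> MR \<Longrightarrow> wlen alpha I u = par_length u"
  using minreps_iff wlen_W card_inversions_eq_par_length by force

lemma wlen_minrep: "y \<in> W \<Longrightarrow> wlen alpha I (minrep alpha I J y) = par_length y"
proof -
  assume y: "y \<in> W"
  have m: "minrep alpha I J y \<in> MR"
    using minrep_spec(1)[OF y] .
  have "wlen alpha I (minrep alpha I J y) = weight_depth (minrep alpha I J y Lam)"
    using wlen_minreps[OF m] par_length_eq_weight_depth minreps_W[OF m] by simp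
  also have "\<dots> = par_length y"
    using minrep_apply_Lam[OF y] par_length_eq_weight_depth[OF y] by simp
  finally show ?thesis .
qed

section \<open>How reflections change the length\<close>

lemma card_pos_roots_split:
  assumes b: "b \<in> R"
  shows "card {t \<in> R. height t > 0 \<and> Q t} =
    card {t \<in> {t \<in> R. height t > 0 \<and> height (refl b t) > 0}. Q t} +
    card {t \<in> {t \<in> R. height t > 0 \<and> height (refl b t) < 0}. Q t}"
    (is "_ = card ?A + card ?B")
proof -
  have "{t \<in> R. height t > 0 \<and> Q t} = ?A \<union> ?B"
  proof (rule set_eqI)
    fix t
    have "t \<in> R \<Longrightarrow> height (refl b t) \<noteq> 0"
      using height_nonzero refl_root[OF b] by blast
    then show "t \<in> {t \<in> R. height t > 0 \<and> Q t} \<longleftrightarrow> t \<in> ?A \<union> ?B"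
      by auto
  qed
  moreover have "finite ?A" "finite ?B" "?A \<inter> ?B = {}"
    using finite_roots by auto
  ultimately show ?thesis
    by (simp add: card_Un_disjoint)
qed

lemma weight_depth_refl:
  assumes b: "b \<in> R" "height b > 0"
  shows "real (weight_depth (refl b mu)) - real (weight_depth mu) =
    (\<Sum>t\<in>inversions (refl b). sgn (mu \<bullet> t))"
proof -
  let ?r = "refl b"
  let ?P1 = "{t \<in> R. height t > 0 \<and> height (?r t) > 0}"
    and ?P2 = "{t \<in> R. height t > 0 \<and> height (?r t) < 0}"
  have nz: "b \<noteq> 0"
    using root_nonzero b by blast
  have rR: "\<And>t. t \<in> R \<Longrightarrow> ?r t \<in> R"
    using refl_root b by blast
  have rr: "\<And>t. ?r (?r t) = t"
    using nz by simp
  note card_split = card_pos_roots_split[OF b(1)]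
  have "card {t \<in> ?P1. mu \<bullet> ?r t < 0} = card {t \<in> ?P1. mu \<bullet> t < 0}"
  proof (rule card_eq_involution[of _ ?r])
    show "\<forall>x\<in>{t \<in> ?P1. mu \<bullet> ?r t < 0}. ?r x \<in> {t \<in> ?P1. mu \<bullet> t < 0}"
      using rr rR by simp
    show "\<forall>x\<in>{t \<in> ?P1. mu \<bullet> t < 0}. ?r x \<in> {t \<in> ?P1. mu \<bullet> ?r t < 0}"
      using rr rR by simp
  qed (simp_all add: rr)
  moreover have "card {t \<in> ?P2. mu \<bullet> ?r t < 0} = card {t \<in> ?P2. mu \<bullet> t > 0}"
  proof (rule card_eq_involution[of _ "\<lambda>t. - ?r t"])
    show "\<forall>x\<in>{t \<in> ?P2. mu \<bullet> ?r t < 0}. - ?r x \<in> {t \<in> ?P2. mu \<bullet> t > 0}"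
      using rr rR uminus_root by (simp add: refl_minus height_uminus)
    show "\<forall>x\<in>{t \<in> ?P2. mu \<bullet> t > 0}. - ?r x \<in> {t \<in> ?P2. mu \<bullet> ?r t < 0}"
      using rr rR uminus_root by (simp add: refl_minus height_uminus)
  qed (simp_all add: rr refl_minus)
  moreover have "weight_depth (?r mu) = card {t \<in> R. height t > 0 \<and> mu \<bullet> ?r t < 0}"
    unfolding weight_depth_def by (simp add: refl_inner_sym)
  ultimately have "weight_depth (?r mu) = card {t \<in> ?P1. mu \<bullet> t < 0} + card {t \<in> ?P2. mu \<bullet> t > 0}"
    using card_split[of "\<lambda>t. mu \<bullet> ?r t < 0"] by simp
  moreover have "weight_depth mu = card {t \<in> ?P1. mu \<bullet> t < 0} + card {t \<in> ?P2. mu \<bullet> t < 0}"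
    unfolding weight_depth_def by (rule card_split)
  moreover have "finite ?P2"
    using finite_roots by simp
  ultimately show ?thesis
    unfolding inversions_def using sum_sgn_eq_card_diff[of ?P2 "\<lambda>t. mu \<bullet> t"] by simp
qed

lemma inversions_refl_simple: "i \<in> I \<Longrightarrow> inversions (refl (alpha i)) = {alpha i}"
proof -
  assume i: "i \<in> I"
  have "height (refl (alpha i) (alpha i)) < 0"
    using refl_self[OF simple_nonzero[OF i]] i by (simp add: height_uminus)
  then show ?thesis
    using height_refl_simple_neg[OF i] simple_root[OF i] i by (auto simp: inversions_def)
qed

lemma weight_depth_refl_simple:
  "i \<in> I \<Longrightarrow> real (weight_depth (refl (alpha i) mu)) = real (weight_depth mu) + sgn (mu \<bullet> alpha i)"
  using weight_depth_refl[OF simple_root, of i mu] inversions_refl_simple[of i] by simp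

text \<open>Pairing \<open>t\<close> with \<open>-r\<^sub>\<beta> t\<close> inside the inversion set of \<open>r\<^sub>\<beta>\<close>: the two pairings with
  \<open>\<mu>\<close> add up to \<open>\<langle>t, \<beta>\<^sup>\<or>\<rangle> (\<mu>, \<beta>) > 0\<close>, and \<open>\<beta>\<close> itself is a fixed point.\<close>

lemma weight_depth_refl_increase:
  assumes b: "b \<in> R" "height b > 0" and mu: "mu \<bullet> b > 0"
  shows "real (weight_depth (refl b mu)) \<ge> real (weight_depth mu) + 1"
proof -
  let ?r = "refl b" and ?P = "inversions (refl b)"
  let ?s = "\<lambda>t. - ?r t"
  have nz: "b \<noteq> 0"
    using root_nonzero b by blast
  have s_P: "\<forall>t\<in>?P. ?s t \<in> ?P" and ss: "\<forall>t\<in>?P. ?s (?s t) = t"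
    using refl_root[OF b(1)]
    by (auto simp: nz uminus_root refl_minus height_uminus inversions_def)
  define S where "S = (\<Sum>t\<in>?P. sgn (mu \<bullet> t))"
  have nonneg: "sgn (mu \<bullet> t) + sgn (mu \<bullet> ?s t) \<ge> 0" if t: "t \<in> ?P" for t
  proof -
    define p where "p = pairing t b"
    have rt: "?r t = t - p *\<^sub>R b"
      by (simp add: refl_eq_pairing p_def)
    then have "height (?r t) = height t - p * height b"
      by (simp add: height_diff height_scaleR)
    then have "p * height b > 0"
      using t by (simp add: inversions_def)
    then have "p > 0"
      using b(2) by (simp add: zero_less_mult_iff)
    then have "p * (mu \<bullet> b) > 0"
      using mu by simp
    moreover have "mu \<bullet> t + mu \<bullet> ?s t = p * (mu \<bullet> b)"
      using rt by (simp add: inner_diff_right)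
    ultimately show ?thesis
      by (auto simp: sgn_real_def)
  qed
  have b_P: "b \<in> ?P"
    using b refl_self[OF nz] by (simp add: inversions_def height_uminus)
  have "(\<Sum>t\<in>?P. sgn (mu \<bullet> ?s t)) = S"
    unfolding S_def by (rule sum_involution[OF s_P ss])
  then have "2 * S = (\<Sum>t\<in>?P. sgn (mu \<bullet> t) + sgn (mu \<bullet> ?s t))"
    by (simp only: sum.distrib S_def mult_2)
  also have "\<dots> \<ge> sgn (mu \<bullet> b) + sgn (mu \<bullet> ?s b)"
    by (rule member_le_sum[OF b_P]) (use nonneg finite_inversions in auto)
  finally have "S \<ge> 1"
    using refl_self[OF nz] mu by simp
  then show ?thesis
    using weight_depth_refl[OF b, of mu] S_def by simp
qed

lemma par_length_refl_simple_left:
  assumes x: "x \<in> W" and j: "j \<in> I"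
  shows "real (par_length (refl (alpha j) \<circ> x)) = real (par_length x) + sgn (pairing (x Lam) (alpha j))"
proof -
  have "refl (alpha j) \<circ> x \<in> W"
    using weyl_gen_comp refl_simple_in_weyl_gen j x by blast
  then have "par_length (refl (alpha j) \<circ> x) = weight_depth (refl (alpha j) (x Lam))"
    using par_length_eq_weight_depth by simp
  then show ?thesis
    using weight_depth_refl_simple[OF j, of "x Lam"] par_length_eq_weight_depth[OF x]
      sgn_pairing[OF simple_nonzero[OF j]] by simp
qed

lemma par_length_refl_increase:
  assumes x: "x \<in> W" and b: "b \<in> R" "Lam \<bullet> b > 0" and xb: "height (x b) > 0"
  shows "real (par_length (x \<circ> refl b)) \<ge> real (par_length x) + 1"
proof -
  have "x \<circ> refl b \<in> W"
    using weyl_gen_comp x refl_in_W b by blast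
  then have "par_length (x \<circ> refl b) = weight_depth (refl (x b) (x Lam))"
    using par_length_eq_weight_depth refl_W_conj[OF x] by simp
  moreover have "x Lam \<bullet> x b > 0"
    using W_inner[OF x] b by simp
  ultimately show ?thesis
    using weight_depth_refl_increase[OF W_root[OF x b(1)] xb] par_length_eq_weight_depth[OF x] by simp
qed

lemma pairing_rho_diff:
  "2 * pairing (rho R I alpha - rho_J R I alpha J) b = (\<Sum>a\<in>{a \<in> R. Lam \<bullet> a > 0}. pairing a b)"
proof -
  have "finite (pos_roots R I alpha)"
    using finite_roots by (simp add: pos_roots_def)
  moreover have "pos_roots_J R I alpha J \<subseteq> pos_roots R I alpha"
    by (auto simp: pos_roots_J_def)
  ultimately have "rho R I alpha - rho_J R I alpha J
      = (1/2) *\<^sub>R (\<Sum>a\<in>pos_roots R I alpha - pos_roots_J R I alpha J. a)"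
    unfolding rho_def rho_J_def by (simp add: sum_diff scaleR_diff_right)
  also have "\<dots> = (1/2) *\<^sub>R (\<Sum>a\<in>{a \<in> R. Lam \<bullet> a > 0}. a)"
    using pos_roots_diff_J_eq by simp
  finally show ?thesis
    unfolding pairing_def by (simp add: inner_sum_left sum_divide_distrib sum_distrib_left)
qed

definition refl_exits :: "'a \<Rightarrow> 'a set" where
  "refl_exits b = {a \<in> R. Lam \<bullet> a > 0 \<and> Lam \<bullet> refl b a \<le> 0}"

text \<open>The roots \<open>a\<close> with \<open>(\<Lambda>, a) > 0\<close> that \<open>r\<^sub>\<beta>\<close> keeps in that set are permuted by \<open>r\<^sub>\<beta>\<close>, so only
  the others can change \<open>par_length\<close>.\<close>

lemma par_length_refl_drop_le:
  assumes b: "b \<in> R"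
  shows "real (par_length x) - real (par_length (x \<circ> refl b)) \<le> real (card (refl_exits b))"
proof -
  let ?r = "refl b"
  define P1 where "P1 = {a \<in> R. Lam \<bullet> a > 0 \<and> Lam \<bullet> ?r a > 0}"
  have rR: "\<And>t. t \<in> R \<Longrightarrow> ?r t \<in> R"
    using refl_root b by blast
  have rr: "\<And>t. ?r (?r t) = t"
    using root_nonzero[OF b] by simp
  have split: "par_length y = card {a \<in> P1. height (y a) < 0} + card {a \<in> refl_exits b. height (y a) < 0}"
    for y
  proof -
    have "{a \<in> R. Lam \<bullet> a > 0 \<and> height (y a) < 0}
        = {a \<in> P1. height (y a) < 0} \<union> {a \<in> refl_exits b. height (y a) < 0}"
      unfolding P1_def refl_exits_def by auto
    moreover have "finite {a \<in> P1. height (y a) < 0}" "finite {a \<in> refl_exits b. height (y a) < 0}"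
      "{a \<in> P1. height (y a) < 0} \<inter> {a \<in> refl_exits b. height (y a) < 0} = {}"
      unfolding P1_def refl_exits_def using finite_roots by auto
    ultimately show ?thesis
      unfolding par_length_def by (simp add: card_Un_disjoint)
  qed
  have "card {a \<in> P1. height (x (?r a)) < 0} = card {a \<in> P1. height (x a) < 0}"
  proof (rule card_eq_involution[of _ ?r])
    show "\<forall>a\<in>{a \<in> P1. height (x (?r a)) < 0}. ?r a \<in> {a \<in> P1. height (x a) < 0}"
      using rr rR unfolding P1_def by simp
    show "\<forall>a\<in>{a \<in> P1. height (x a) < 0}. ?r a \<in> {a \<in> P1. height (x (?r a)) < 0}"
      using rr rR unfolding P1_def by simp
  qed (simp_all add: rr)
  moreover have "card {a \<in> refl_exits b. height (x a) < 0} \<le> card (refl_exits b)"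
    by (rule card_mono) (auto simp: refl_exits_def finite_roots)
  moreover have "par_length (x \<circ> ?r)
      = card {a \<in> P1. height (x (?r a)) < 0} + card {a \<in> refl_exits b. height (x (?r a)) < 0}"
    using split[of "x \<circ> ?r"] by simp
  ultimately show ?thesis
    using split[of x] by simp
qed

lemma pairing_ge_one_if_refl_exits:
  assumes b: "b \<in> R" "Lam \<bullet> b > 0" and a: "a \<in> refl_exits b"
  shows "pairing a b \<ge> 1"
proof -
  have a': "a \<in> R" "Lam \<bullet> a > 0" "Lam \<bullet> refl b a \<le> 0"
    using a by (auto simp: refl_exits_def)
  have "Lam \<bullet> refl b a = Lam \<bullet> a - pairing a b * (Lam \<bullet> b)"
    using inner_refl_left[of b a Lam] by (simp add: inner_commute)
  then have "pairing a b * (Lam \<bullet> b) > 0"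
    using a' by linarith
  then have "pairing a b > 0"
    using b(2) by (simp add: zero_less_mult_iff)
  moreover obtain k :: int where "pairing a b = of_int k"
    using pairing_root_Ints[OF b(1) a'(1)] by (auto elim: Ints_cases)
  ultimately show ?thesis
    by simp
qed

lemma sum_pairing_refl_stays:
  assumes b: "b \<in> R"
  shows "(\<Sum>a\<in>{a \<in> R. Lam \<bullet> a > 0 \<and> Lam \<bullet> refl b a > 0}. pairing a b) = 0"
    (is "(\<Sum>a\<in>?P. pairing a b) = 0")
proof -
  have nz: "b \<noteq> 0"
    using root_nonzero b by blast
  have "(\<Sum>a\<in>?P. pairing (refl b a) b) = (\<Sum>a\<in>?P. pairing a b)"
    by (rule sum_involution) (use refl_root[OF b] nz in simp_all)
  moreover have "(\<Sum>a\<in>?P. pairing (refl b a) b) = - (\<Sum>a\<in>?P. pairing a b)"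
    by (simp add: pairing_refl_self[OF nz] sum_negf)
  ultimately show ?thesis
    by simp
qed

text \<open>\<open>\<langle>\<beta>, \<beta>\<^sup>\<or>\<rangle> = 2\<close> accounts for the extra \<open>1\<close>.\<close>

lemma card_refl_exits_bound:
  assumes b: "b \<in> R" "Lam \<bullet> b > 0"
  shows "real (card (refl_exits b)) + 1 \<le> 2 * pairing (rho R I alpha - rho_J R I alpha J) b"
proof -
  define P where "P = {a \<in> R. Lam \<bullet> a > 0 \<and> Lam \<bullet> refl b a > 0}"
  have nz: "b \<noteq> 0"
    using root_nonzero b by blast
  have fin: "finite P" "finite (refl_exits b)"
    unfolding P_def refl_exits_def using finite_roots by simp_all
  have "pairing a b \<ge> 1 + (if a = b then 1 else 0)" if "a \<in> refl_exits b" for a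
    using pairing_ge_one_if_refl_exits[OF b that] inner_root_pos[OF b(1)]
    by (auto simp: pairing_def)
  moreover have "b \<in> refl_exits b"
    using b refl_self[OF nz] by (simp add: refl_exits_def)
  ultimately have "real (card (refl_exits b)) + 1 \<le> (\<Sum>a\<in>refl_exits b. pairing a b)"
    using sum_mono[of "refl_exits b" "\<lambda>a. 1 + (if a = b then 1 else (0::real))" "\<lambda>a. pairing a b"]
      fin(2) by (simp add: sum.distrib)
  also have "\<dots> = (\<Sum>a\<in>P. pairing a b) + (\<Sum>a\<in>refl_exits b. pairing a b)"
    using sum_pairing_refl_stays[OF b(1)] unfolding P_def by simp
  also have "\<dots> = (\<Sum>a\<in>{a \<in> R. Lam \<bullet> a > 0}. pairing a b)"
  proof -
    have "{a \<in> R. Lam \<bullet> a > 0} = P \<union> refl_exits b" "P \<inter> refl_exits b = {}"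
      unfolding P_def refl_exits_def by auto
    then show ?thesis
      using sum.union_disjoint[OF fin, of "\<lambda>a. pairing a b"] by simp
  qed
  finally show ?thesis
    using pairing_rho_diff by simp
qed

lemma par_length_refl_decrease_le:
  assumes "b \<in> R" "Lam \<bullet> b > 0"
  shows "real (par_length x) - real (par_length (x \<circ> refl b))
    \<le> 2 * pairing (rho R I alpha - rho_J R I alpha J) b - 1"
  using par_length_refl_drop_le[OF assms(1), of x] card_refl_exits_bound[OF assms] by linarith

section \<open>Edges of the parabolic quantum Bruhat graph\<close>

lemma pqbg_edge_par_length:
  assumes "pqbg_edge R I alpha J w b (minrep alpha I J (w \<circ> refl b))"
  shows "w \<in> MR" and "b \<in> R" and "Lam \<bullet> b > 0"
    and "real (par_length (w \<circ> refl b)) = real (par_length w) + 1 \<or>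
      real (par_length (w \<circ> refl b)) =
        real (par_length w) - 2 * pairing (rho R I alpha - rho_J R I alpha J) b + 1"
proof -
  show w: "w \<in> MR" and b: "b \<in> R" "Lam \<bullet> b > 0"
    using assms pos_roots_diff_J_eq by (auto simp: pqbg_edge_def)
  have "w \<circ> refl b \<in> W"
    using weyl_gen_comp minreps_W[OF w] refl_in_W[OF b(1)] by blast
  then show "real (par_length (w \<circ> refl b)) = real (par_length w) + 1 \<or>
      real (par_length (w \<circ> refl b)) =
        real (par_length w) - 2 * pairing (rho R I alpha - rho_J R I alpha J) b + 1"
    using assms wlen_minrep wlen_minreps[OF w] by (auto simp: pqbg_edge_def)
qed

lemma height_pos_if_par_length_refl_succ:
  assumes x: "x \<in> W" and b: "b \<in> R" "Lam \<bullet> b > 0"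
    and succ: "real (par_length (x \<circ> refl b)) = real (par_length x) + 1"
  shows "height (x b) > 0"
proof (rule ccontr)
  assume "\<not> height (x b) > 0"
  then have "height (x b) < 0"
    using height_nonzero[OF W_root[OF x b(1)]] by linarith
  moreover have "(x \<circ> refl b) b = - x b"
    using refl_self[OF root_nonzero[OF b(1)]] W_uminus[OF x] by simp
  moreover have "x \<circ> refl b \<in> W"
    using weyl_gen_comp x refl_in_W[OF b(1)] by blast
  ultimately have "real (par_length ((x \<circ> refl b) \<circ> refl b)) \<ge> real (par_length (x \<circ> refl b)) + 1"
    using par_length_refl_increase[OF _ b] by (simp add: height_uminus)
  moreover have "(x \<circ> refl b) \<circ> refl b = x"
    using root_nonzero[OF b(1)] by (simp add: fun_eq_iff)
  ultimately show False
    using succ by simp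
qed

text \<open>Both kinds of edges give the same lower bound for the length difference after
  multiplying by \<open>r\<^sub>j\<close> on the left; for a Bruhat edge this needs \<open>w\<beta> \<noteq> \<alpha>\<^sub>j\<close>.\<close>

lemma pqbg_edge_sgn_le:
  assumes edge: "pqbg_edge R I alpha J w b (minrep alpha I J (w \<circ> refl b))"
    and j: "j \<in> I" and ne: "w b \<noteq> alpha j"
  shows "sgn (pairing (w Lam) (alpha j)) \<le> sgn (pairing ((w \<circ> refl b) Lam) (alpha j))"
proof -
  let ?y = "w \<circ> refl b" and ?s = "refl (alpha j)"
  note w = pqbg_edge_par_length(1)[OF edge] and b = pqbg_edge_par_length(2,3)[OF edge]
  have wW: "w \<in> W"
    using minreps_W[OF w] .
  have sw: "?s \<circ> w \<in> W" and y: "?y \<in> W"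
    using weyl_gen_comp refl_simple_in_weyl_gen[OF j] wW refl_in_W[OF b(1)] by blast+
  have "real (par_length (?s \<circ> ?y)) - real (par_length (?s \<circ> w)) \<ge>
      real (par_length ?y) - real (par_length w)"
    using pqbg_edge_par_length(4)[OF edge]
  proof
    assume succ: "real (par_length ?y) = real (par_length w) + 1"
    have "height (?s (w b)) > 0"
      using height_refl_simple_pos[OF j W_root[OF wW b(1)]
          height_pos_if_par_length_refl_succ[OF wW b succ] ne] .
    then have "real (par_length ((?s \<circ> w) \<circ> refl b)) \<ge> real (par_length (?s \<circ> w)) + 1"
      using par_length_refl_increase[OF sw b] by simp
    then show ?thesis
      using succ by (simp add: comp_assoc)
  next
    assume "real (par_length ?y) =
      real (par_length w) - 2 * pairing (rho R I alpha - rho_J R I alpha J) b + 1"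
    then show ?thesis
      using par_length_refl_decrease_le[OF b, of "?s \<circ> w"] by (simp add: comp_assoc)
  qed
  then show ?thesis
    using par_length_refl_simple_left[OF y j] par_length_refl_simple_left[OF wW j] by simp
qed

lemma refl_simple_comp_minreps:
  assumes u: "u \<in> MR" and j: "j \<in> I" and nz: "pairing (u Lam) (alpha j) \<noteq> 0"
  shows "refl (alpha j) \<circ> u \<in> MR"
proof -
  have uW: "u \<in> W" and u_pos: "\<forall>k\<in>J. height (u (alpha k)) > 0"
    using u minreps_iff by auto
  have "height (refl (alpha j) (u (alpha k))) > 0" if k: "k \<in> J" for k
  proof -
    have kI: "k \<in> I"
      using k J_subset by blast
    have "u (alpha k) \<noteq> alpha j"
    proof
      assume "u (alpha k) = alpha j"
      then have "u Lam \<bullet> alpha j = Lam \<bullet> alpha k"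
        using W_inner[OF uW, of Lam "alpha k"] by simp
      then show False
        using k in_J_iff nz by (simp add: pairing_def)
    qed
    then show ?thesis
      using height_refl_simple_pos[OF j W_root[OF uW simple_root[OF kI]]] u_pos k by blast
  qed
  moreover have "refl (alpha j) \<circ> u \<in> W"
    using weyl_gen_comp refl_simple_in_weyl_gen j uW by blast
  ultimately show ?thesis
    using minreps_iff by simp
qed

lemma wlen_refl_simple_comp:
  assumes u: "u \<in> MR" and j: "j \<in> I" and su: "refl (alpha j) \<circ> u \<in> MR"
  shows "real (wlen alpha I (refl (alpha j) \<circ> u)) =
    real (wlen alpha I u) + sgn (pairing (u Lam) (alpha j))"
  using wlen_minreps[OF su] wlen_minreps[OF u] par_length_refl_simple_left[OF minreps_W[OF u] j]
  by simp

lemma pqbg_edge_refl_simple: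
  assumes edge: "pqbg_edge R I alpha J w b (minrep alpha I J (w \<circ> refl b))" and j: "j \<in> I"
    and same: "sgn (pairing (w Lam) (alpha j)) = sgn (pairing ((w \<circ> refl b) Lam) (alpha j))"
    and nz: "pairing (w Lam) (alpha j) \<noteq> 0"
  shows "refl (alpha j) \<circ> minrep alpha I J (w \<circ> refl b) \<in> MR \<and> refl (alpha j) \<circ> w \<in> MR \<and>
    pqbg_edge R I alpha J (refl (alpha j) \<circ> w) b (refl (alpha j) \<circ> minrep alpha I J (w \<circ> refl b))"
proof -
  let ?y = "w \<circ> refl b" and ?s = "refl (alpha j)"
  define u where "u = minrep alpha I J ?y"
  define \<sigma> where "\<sigma> = sgn (pairing (w Lam) (alpha j))"
  note w = pqbg_edge_par_length(1)[OF edge] and b = pqbg_edge_par_length(2,3)[OF edge]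
  have wW: "w \<in> W"
    using minreps_W[OF w] .
  have y: "?y \<in> W"
    using weyl_gen_comp wW refl_in_W[OF b(1)] by blast
  obtain v where v: "v \<in> W_J" "u = ?y \<circ> v" and u: "u \<in> MR"
    using minrep_spec[OF y] unfolding u_def by blast
  have uLam: "u Lam = ?y Lam"
    using minrep_apply_Lam[OF y] unfolding u_def .
  have "pairing (u Lam) (alpha j) \<noteq> 0"
    using same nz uLam by (metis sgn_0_0)
  then have su: "?s \<circ> u \<in> MR"
    using refl_simple_comp_minreps[OF u j] by blast
  have sw: "?s \<circ> w \<in> MR"
    using refl_simple_comp_minreps[OF w j nz] .
  have "(?s \<circ> w) \<circ> refl b \<in> W"
    using weyl_gen_comp minreps_W[OF sw] refl_in_W[OF b(1)] by blast
  then have target: "minrep alpha I J ((?s \<circ> w) \<circ> refl b) = ?s \<circ> u"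
    by (rule minrep_eq[OF _ su v(1)]) (simp add: v(2) comp_assoc)
  have len_su: "real (wlen alpha I (?s \<circ> u)) = real (par_length ?y) + \<sigma>"
    using wlen_refl_simple_comp[OF u j su] wlen_minrep[OF y] uLam same
    unfolding u_def \<sigma>_def by simp
  have len_sw: "real (wlen alpha I (?s \<circ> w)) = real (par_length w) + \<sigma>"
    using wlen_refl_simple_comp[OF w j sw] wlen_minreps[OF w] unfolding \<sigma>_def by simp
  have "wlen alpha I (?s \<circ> u) = wlen alpha I (?s \<circ> w) + 1 \<or>
      real (wlen alpha I (?s \<circ> u)) = real (wlen alpha I (?s \<circ> w))
          - 2 * pairing (rho R I alpha - rho_J R I alpha J) b + 1"
    using pqbg_edge_par_length(4)[OF edge] len_su len_sw by linarith
  then have "pqbg_edge R I alpha J (?s \<circ> w) b (?s \<circ> u)"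
    using sw target edge by (simp add: pqbg_edge_def)
  then show ?thesis
    using su sw unfolding u_def by simp
qed

end

theorem lemma4p4:
  fixes R :: "'a::euclidean_space set" and I :: "'i set" and alpha :: "'i \<Rightarrow> 'a"
    and Lam :: 'a and w :: "'a \<Rightarrow> 'a" and b :: 'a and j :: 'i
  assumes rs: "root_system R" and irr: "irreducible_rs R"
    and base: "is_base R I alpha"
    and dom: "\<forall>i\<in>I. \<exists>m::nat. pairing Lam (alpha i) = real m"
    and w: "w \<in> minreps alpha I (Jset alpha I Lam)"
    and b: "b \<in> pos_roots R I alpha - pos_roots_J R I alpha (Jset alpha I Lam)"
    and edge: "pqbg_edge R I alpha (Jset alpha I Lam) w b
                 (minrep alpha I (Jset alpha I Lam) (w \<circ> refl b))"
    and j: "j \<in> I"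
  shows
   "(pairing (w Lam) (alpha j) > 0 \<and> w b \<noteq> alpha j \<and> w b \<noteq> - alpha j \<longrightarrow>
       pairing ((w \<circ> refl b) Lam) (alpha j) > 0 \<and>
       refl (alpha j) \<circ> minrep alpha I (Jset alpha I Lam) (w \<circ> refl b) \<in> minreps alpha I (Jset alpha I Lam) \<and>
       refl (alpha j) \<circ> w \<in> minreps alpha I (Jset alpha I Lam) \<and>
       pqbg_edge R I alpha (Jset alpha I Lam) (refl (alpha j) \<circ> w) b
          (refl (alpha j) \<circ> minrep alpha I (Jset alpha I Lam) (w \<circ> refl b)))
  \<and> (pairing ((w \<circ> refl b) Lam) (alpha j) < 0 \<and> w b \<noteq> alpha j \<and> w b \<noteq> - alpha j \<longrightarrow>
       pairing (w Lam) (alpha j) < 0 \<and>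
       refl (alpha j) \<circ> minrep alpha I (Jset alpha I Lam) (w \<circ> refl b) \<in> minreps alpha I (Jset alpha I Lam) \<and>
       refl (alpha j) \<circ> w \<in> minreps alpha I (Jset alpha I Lam) \<and>
       pqbg_edge R I alpha (Jset alpha I Lam) (refl (alpha j) \<circ> w) b
          (refl (alpha j) \<circ> minrep alpha I (Jset alpha I Lam) (w \<circ> refl b)))
  \<and> (pairing ((w \<circ> refl b) Lam) (alpha j) < 0 \<and> pairing (w Lam) (alpha j) \<ge> 0 \<longrightarrow>
       w b = alpha j \<or> w b = - alpha j)
  \<and> (pairing ((w \<circ> refl b) Lam) (alpha j) \<le> 0 \<and> pairing (w Lam) (alpha j) > 0 \<longrightarrow>
       w b = alpha j \<or> w b = - alpha j)"
proof -
  interpret dominant_weight R I alpha Lam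
    by unfold_locales (fact rs base dom)+
  let ?p = "pairing (w Lam) (alpha j)" and ?q = "pairing ((w \<circ> refl b) Lam) (alpha j)"
  have mono: "sgn ?p \<le> sgn ?q" if "w b \<noteq> alpha j"
    using pqbg_edge_sgn_le[OF edge j that] .
  have pos: "?q > 0" if "?p > 0" "w b \<noteq> alpha j"
    using mono that by (auto simp: sgn_real_def split: if_splits)
  have neg: "?p < 0" if "?q < 0" "w b \<noteq> alpha j"
    using mono that by (auto simp: sgn_real_def split: if_splits)
  show ?thesis
    using pos neg pqbg_edge_refl_simple[OF edge j] by force
qed

end
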